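(* Fix $c>0$, suppose $(\log n)^2\ll k\ll\sqrt n$ and $m=c\frac{k^2n}{\log n}(1+o(1))$, and let $G\sim G(n,m)$. Let $a_n=k\sigma/\mu$ and let $t_n$ be any sequence with $t_n/\sqrt{2\log n}\to1$. Then $$\sup_{j}\left|\frac{\mathbb E\big[e^{a_nY_2}\mathbf 1\{Y_2\ge t_n\}\mid d_1=j\big]}{\mathbb E\big[e^{a_nY_2}\mathbf 1\{Y_2\ge t_n\}\big]}-1\right|\to0,$$ where the supremum is over $j\in\{0,1,\dots,n-1\}$ with $\mathbb P(d_1=j)>0$.
   Context: $N=\binom n2$; $G(n,m)$ is the uniform distribution over graphs on $[n]$ with exactly $m$ edges; asymptotics are as $n\to\infty$ with $k=k(n),m=m(n)$, and $a\ll b$ means $a/b\to0$. $d_i$ is the degree of vertex $i$. With $p=m/N$: $\mu=(n-1)p=2m/n$ and $\sigma^2=(n-1)p(1-p)\frac{N}{N-1}\cdot\frac{N-(n-1)}{N-1}$ are the mean and variance of a vertex degree, and $Y_i=(d_i-\mu)/\sigma$. *)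

theory Defs
  imports "HOL-Analysis.Analysis"
begin

definition all_edges :: "nat \<Rightarrow> nat set set" where
  "all_edges n = {e. \<exists>i j. 1 \<le> i \<and> i < j \<and> j \<le> n \<and> e = {i, j}}"

definition Gnm :: "nat \<Rightarrow> nat \<Rightarrow> nat set set set" where
  "Gnm n m = {E. E \<subseteq> all_edges n \<and> card E = m}"

definition deg :: "nat set set \<Rightarrow> nat \<Rightarrow> nat" where
  "deg E i = card {e \<in> E. i \<in> e}"

definition Gprob :: "nat \<Rightarrow> nat \<Rightarrow> (nat set set \<Rightarrow> bool) \<Rightarrow> real" where
  "Gprob n m P = real (card {E \<in> Gnm n m. P E}) / real (card (Gnm n m))"

definition Gexp :: "nat \<Rightarrow> nat \<Rightarrow> (nat set set \<Rightarrow> real) \<Rightarrow> real" where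
  "Gexp n m f = (\<Sum>E\<in>Gnm n m. f E) / real (card (Gnm n m))"

text \<open>Conditional expectation given the event P (assumed of positive probability).\<close>
definition Gcondexp :: "nat \<Rightarrow> nat \<Rightarrow> (nat set set \<Rightarrow> real) \<Rightarrow> (nat set set \<Rightarrow> bool) \<Rightarrow> real" where
  "Gcondexp n m f P = (\<Sum>E\<in>{E \<in> Gnm n m. P E}. f E) / real (card {E \<in> Gnm n m. P E})"

definition NN :: "nat \<Rightarrow> real" where
  "NN n = real (n choose 2)"

definition pp :: "nat \<Rightarrow> nat \<Rightarrow> real" where
  "pp n m = real m / NN n"

definition mu :: "nat \<Rightarrow> nat \<Rightarrow> real" where
  "mu n m = (real n - 1) * pp n m"

definition sigma :: "nat \<Rightarrow> nat \<Rightarrow> real" where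
  "sigma n m = sqrt ((real n - 1) * pp n m * (1 - pp n m) * (NN n / (NN n - 1))
                     * ((NN n - (real n - 1)) / (NN n - 1)))"

definition Ydeg :: "nat \<Rightarrow> nat \<Rightarrow> nat set set \<Rightarrow> nat \<Rightarrow> real" where
  "Ydeg n m E i = (real (deg E i) - mu n m) / sigma n m"

end

theory Submission
  imports Defs
begin

text \<open>Condition on \<open>d\<^sub>1 = j\<close>. The star of vertex 1 is then a uniform \<open>j\<close>-set, and the remaining
  \<open>m - j\<close> edges form a uniform graph on \<open>{2..n}\<close>, in which \<open>d\<^sub>2\<close> is hypergeometric; the edge
  \<open>{1,2}\<close> changes \<open>d\<^sub>2\<close> by at most one. Writing \<open>f(d) = e\<^sup>a\<^sup>Y \<one>{Y \<ge> t}\<close> with \<open>Y = (d - \<mu>)/\<sigma>\<close>,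
  \<open>f\<close> vanishes below the threshold \<open>\<mu> + t\<sigma>\<close> and grows by the factor \<open>\<lambda> = e\<^sup>k\<^sup>/\<^sup>\<mu> \<approx> 1\<close> above it.
  Pascal's rule shows that the hypergeometric mean \<open>P(r)\<close> of \<open>f\<close> with \<open>r\<close> draws changes by a
  relative amount \<open>\<gamma> = O(1/(nM))\<close> per extra draw, as long as the mass at the threshold is a
  \<open>O(1/M)\<close> fraction of the total, which holds because the hypergeometric weights are almost
  increasing on the \<open>M\<close> values above the threshold (this is where \<open>t\<^sup>2, M, k \<ll> \<mu> \<ll> n\<close> enter).
  Over the \<open>n\<close> values \<open>r = m - j\<close> the means therefore agree up to a factor \<open>(1 \<plusminus> \<gamma>)\<^sup>n = 1 + O(1/M)\<close>,
  and so do all conditional expectations and their mixture, the unconditional one. Finally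
  \<open>M \<rightarrow> \<infinity>\<close> slowly.\<close>

subsection \<open>Splitting a family of subsets along a partition\<close>

lemma bij_betw_split_subsets:
  assumes "finite A" "finite B" "A \<inter> B = {}" "j \<le> r"
  shows "bij_betw (\<lambda>E. (E \<inter> A, E \<inter> B)) {E. E \<subseteq> A \<union> B \<and> card E = r \<and> card (E \<inter> A) = j}
           ({S. S \<subseteq> A \<and> card S = j} \<times> {R. R \<subseteq> B \<and> card R = r - j})"
proof (rule bij_betw_byWitness[where f' = "\<lambda>(S, R). S \<union> R"])
  show "\<forall>E\<in>{E. E \<subseteq> A \<union> B \<and> card E = r \<and> card (E \<inter> A) = j}.
          (case (E \<inter> A, E \<inter> B) of (S, R) \<Rightarrow> S \<union> R) = E"
    by auto
  show "\<forall>p\<in>{S. S \<subseteq> A \<and> card S = j} \<times> {R. R \<subseteq> B \<and> card R = r - j}.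
          ((\<lambda>(S, R). S \<union> R) p \<inter> A, (\<lambda>(S, R). S \<union> R) p \<inter> B) = p"
    using assms(3) by auto
  show "(\<lambda>E. (E \<inter> A, E \<inter> B)) ` {E. E \<subseteq> A \<union> B \<and> card E = r \<and> card (E \<inter> A) = j}
        \<subseteq> {S. S \<subseteq> A \<and> card S = j} \<times> {R. R \<subseteq> B \<and> card R = r - j}"
  proof
    fix p assume "p \<in> (\<lambda>E. (E \<inter> A, E \<inter> B)) ` {E. E \<subseteq> A \<union> B \<and> card E = r \<and> card (E \<inter> A) = j}"
    then obtain E where E: "E \<subseteq> A \<union> B" "card E = r" "card (E \<inter> A) = j"
      and p: "p = (E \<inter> A, E \<inter> B)" by auto
    have "finite E" using E(1) assms(1,2) finite_subset by blast
    moreover have "E = (E \<inter> A) \<union> (E \<inter> B)" using E(1) by auto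
    ultimately have "card E = card (E \<inter> A) + card (E \<inter> B)"
      using assms(3) by (metis card_Un_disjoint finite_Int inf_assoc inf_bot_right inf_left_commute)
    thus "p \<in> {S. S \<subseteq> A \<and> card S = j} \<times> {R. R \<subseteq> B \<and> card R = r - j}" using E p by auto
  qed
  show "(\<lambda>(S, R). S \<union> R) ` ({S. S \<subseteq> A \<and> card S = j} \<times> {R. R \<subseteq> B \<and> card R = r - j})
        \<subseteq> {E. E \<subseteq> A \<union> B \<and> card E = r \<and> card (E \<inter> A) = j}"
  proof
    fix E assume "E \<in> (\<lambda>(S, R). S \<union> R) ` ({S. S \<subseteq> A \<and> card S = j} \<times> {R. R \<subseteq> B \<and> card R = r - j})"
    then obtain S R where S: "S \<subseteq> A" "card S = j" and R: "R \<subseteq> B" "card R = r - j"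
      and E: "E = S \<union> R" by auto
    have "finite S" "finite R" "S \<inter> R = {}" using S R assms finite_subset by auto
    hence "card E = r" using E S R assms(4) by (simp add: card_Un_disjoint)
    moreover have "E \<inter> A = S" using E S R assms(3) by auto
    ultimately show "E \<in> {E. E \<subseteq> A \<union> B \<and> card E = r \<and> card (E \<inter> A) = j}" using E S R by auto
  qed
qed

lemma sum_split_subsets:
  fixes g :: "'a set \<Rightarrow> real"
  assumes "finite A" "finite B" "A \<inter> B = {}" "j \<le> r"
  shows "(\<Sum>E\<in>{E. E \<subseteq> A \<union> B \<and> card E = r \<and> card (E \<inter> A) = j}. g (E \<inter> B))
         = real (card A choose j) * (\<Sum>R\<in>{R. R \<subseteq> B \<and> card R = r - j}. g R)"
proof -
  have "(\<Sum>E\<in>{E. E \<subseteq> A \<union> B \<and> card E = r \<and> card (E \<inter> A) = j}. g (E \<inter> B))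
      = (\<Sum>p\<in>{S. S \<subseteq> A \<and> card S = j} \<times> {R. R \<subseteq> B \<and> card R = r - j}. g (snd p))"
    using sum.reindex_bij_betw[OF bij_betw_split_subsets[OF assms], of "\<lambda>p. g (snd p)"] by simp
  also have "\<dots> = (\<Sum>S\<in>{S. S \<subseteq> A \<and> card S = j}. \<Sum>R\<in>{R. R \<subseteq> B \<and> card R = r - j}. g R)"
    by (simp only: sum.cartesian_product split_def)
  also have "\<dots> = real (card A choose j) * (\<Sum>R\<in>{R. R \<subseteq> B \<and> card R = r - j}. g R)"
    using n_subsets[OF assms(1), of j] by simp
  finally show ?thesis .
qed

lemma card_split_subsets:
  assumes "finite A" "finite B" "A \<inter> B = {}" "j \<le> r"
  shows "card {E. E \<subseteq> A \<union> B \<and> card E = r \<and> card (E \<inter> A) = j}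
         = (card A choose j) * (card B choose (r - j))"
  using sum_split_subsets[OF assms, of "\<lambda>_. 1"] n_subsets[OF assms(2), of "r - j"]
  by (simp flip: of_nat_mult)

subsection \<open>Hypergeometric sums\<close>

definition hyp_weight :: "nat \<Rightarrow> nat \<Rightarrow> nat \<Rightarrow> nat \<Rightarrow> real" where
  "hyp_weight K B r x = real (K choose x) * real (B choose (r - x))"

definition hyp_sum :: "nat \<Rightarrow> nat \<Rightarrow> (nat \<Rightarrow> real) \<Rightarrow> nat \<Rightarrow> real" where
  "hyp_sum K B f r = (\<Sum>x\<le>r. hyp_weight K B r x * f x)"

text \<open>By Vandermonde's identity this is the expectation of \<open>f\<close> at the number of marked elements in a
  uniform \<open>r\<close>-subset of \<open>K\<close> marked and \<open>B\<close> unmarked ones.\<close>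

definition hyp_mean :: "nat \<Rightarrow> nat \<Rightarrow> (nat \<Rightarrow> real) \<Rightarrow> nat \<Rightarrow> real" where
  "hyp_mean K B f r = hyp_sum K B f r / real ((K + B) choose r)"

lemma real_choose_Suc_mult: "real (B choose Suc y) * real (Suc y) = real (B choose y) * real (B - y)"
  by (metis binomial_absorb_comp binomial_absorption mult.commute of_nat_mult)

lemma Suc_choose_two: "Suc k choose 2 = k + (k choose 2)"
  by (simp add: numeral_2_eq_2)

lemma real_choose_two: "real (n choose 2) = real n * (real n - 1) / 2"
  by (induction n) (simp_all add: Suc_choose_two field_simps)

lemma hyp_weight_nonneg: "0 \<le> hyp_weight K B r x"
  by (simp add: hyp_weight_def)

lemma hyp_weight_eq_0: "K < x \<or> B < r - x \<Longrightarrow> hyp_weight K B r x = 0"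
  by (auto simp: hyp_weight_def)

lemma hyp_sum_nonneg: "(\<And>x. 0 \<le> f x) \<Longrightarrow> 0 \<le> hyp_sum K B f r"
  unfolding hyp_sum_def by (intro sum_nonneg mult_nonneg_nonneg hyp_weight_nonneg)

lemma hyp_mean_nonneg: "(\<And>x. 0 \<le> f x) \<Longrightarrow> 0 \<le> hyp_mean K B f r"
  unfolding hyp_mean_def by (intro divide_nonneg_nonneg hyp_sum_nonneg) auto

lemma hyp_sum_pos:
  assumes "\<And>x. 0 \<le> f x" "0 < f x" "x \<le> r" "x \<le> K" "r - x \<le> B"
  shows "0 < hyp_sum K B f r"
proof -
  have "0 < hyp_weight K B r x * f x" using assms by (simp add: hyp_weight_def)
  also have "\<dots> \<le> hyp_sum K B f r" unfolding hyp_sum_def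
    by (rule member_le_sum) (use assms in \<open>auto intro: mult_nonneg_nonneg hyp_weight_nonneg\<close>)
  finally show ?thesis .
qed

lemma hyp_sum_scale_add_point:
  "x0 \<le> r \<Longrightarrow> hyp_sum K B (\<lambda>x. c * f x + (if x = x0 then y else 0)) r
     = c * hyp_sum K B f r + hyp_weight K B r x0 * y"
proof -
  assume "x0 \<le> r"
  have "hyp_sum K B (\<lambda>x. c * f x + (if x = x0 then y else 0)) r
      = (\<Sum>x\<le>r. c * (hyp_weight K B r x * f x) + (if x = x0 then hyp_weight K B r x0 * y else 0))"
    unfolding hyp_sum_def by (rule sum.cong) (auto simp: algebra_simps)
  thus ?thesis using \<open>x0 \<le> r\<close> by (simp add: hyp_sum_def sum.distrib sum_distrib_left)
qed

text \<open>The recursion behind Pascal's rule: drawing one more element either misses or hits the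
  \<open>K\<close> marked ones.\<close>

lemma Suc_mult_hyp_sum:
  "real (Suc r) * hyp_sum K B f (Suc r) =
     (\<Sum>x\<le>r. hyp_weight K B r x * (real (B - (r - x)) * f x + real (K - x) * f (Suc x)))"
proof -
  have miss: "real (Suc r - x) * hyp_weight K B (Suc r) x = hyp_weight K B r x * real (B - (r - x))"
    if "x \<le> r" for x
    using real_choose_Suc_mult[of B "r - x"] that by (simp add: hyp_weight_def Suc_diff_le algebra_simps)
  have hit: "real (Suc x) * hyp_weight K B (Suc r) (Suc x) = hyp_weight K B r x * real (K - x)" for x
  proof -
    have "real (Suc x) * hyp_weight K B (Suc r) (Suc x)
        = (real (K choose Suc x) * real (Suc x)) * real (B choose (r - x))"
      by (simp add: hyp_weight_def)
    thus ?thesis unfolding real_choose_Suc_mult by (simp add: hyp_weight_def)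
  qed
  have "real (Suc r) * hyp_sum K B f (Suc r) =
      (\<Sum>x\<le>Suc r. real (Suc r - x) * hyp_weight K B (Suc r) x * f x) +
      (\<Sum>x\<le>Suc r. real x * hyp_weight K B (Suc r) x * f x)"
    unfolding hyp_sum_def sum_distrib_left sum.distrib[symmetric]
    by (rule sum.cong[OF refl]) (auto simp: algebra_simps of_nat_diff)
  also have "(\<Sum>x\<le>Suc r. real (Suc r - x) * hyp_weight K B (Suc r) x * f x) =
             (\<Sum>x\<le>r. real (Suc r - x) * hyp_weight K B (Suc r) x * f x)"
    by (simp add: sum.atMost_Suc)
  also have "\<dots> = (\<Sum>x\<le>r. hyp_weight K B r x * real (B - (r - x)) * f x)"
    by (rule sum.cong[OF refl]) (metis atMost_iff miss)
  also have "(\<Sum>x\<le>Suc r. real x * hyp_weight K B (Suc r) x * f x) =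
             (\<Sum>x\<le>r. real (Suc x) * hyp_weight K B (Suc r) (Suc x) * f (Suc x))"
    by (subst sum.atMost_Suc_shift) simp
  also have "\<dots> = (\<Sum>x\<le>r. hyp_weight K B r x * real (K - x) * f (Suc x))"
    by (simp only: hit)
  finally show ?thesis by (simp add: sum.distrib[symmetric] algebra_simps)
qed

lemma hyp_mean_Suc:
  assumes "r < K + B"
  shows "hyp_mean K B f (Suc r) - hyp_mean K B f r
       = (\<Sum>x\<le>r. hyp_weight K B r x * real (K - x) * (f (Suc x) - f x))
           / (real (K + B - r) * real ((K + B) choose r))"
proof -
  define D where "D = (\<Sum>x\<le>r. hyp_weight K B r x * real (K - x) * (f (Suc x) - f x))"
  have summand: "hyp_weight K B r x * (real (B - (r - x)) * f x + real (K - x) * f (Suc x)) =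
      real (K + B - r) * (hyp_weight K B r x * f x) + hyp_weight K B r x * real (K - x) * (f (Suc x) - f x)"
    if "x \<le> r" for x
  proof (cases "K < x \<or> B < r - x")
    case True thus ?thesis by (simp add: hyp_weight_eq_0)
  next
    case False
    hence "x \<le> K" "r \<le> B + x" by auto
    hence "real (K + B - r) = real (B - (r - x)) + real (K - x)" using assms that by (simp add: of_nat_diff)
    thus ?thesis by (simp add: algebra_simps)
  qed
  have rec: "real (Suc r) * hyp_sum K B f (Suc r) = real (K + B - r) * hyp_sum K B f r + D"
  proof -
    have "real (Suc r) * hyp_sum K B f (Suc r) = (\<Sum>x\<le>r. real (K + B - r) * (hyp_weight K B r x * f x)
        + hyp_weight K B r x * real (K - x) * (f (Suc x) - f x))"
      unfolding Suc_mult_hyp_sum by (rule sum.cong[OF refl]) (metis atMost_iff summand)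
    thus ?thesis unfolding D_def hyp_sum_def by (simp add: sum.distrib sum_distrib_left)
  qed
  have pos: "0 < real ((K + B) choose r)" "0 < real (K + B - r)" using assms by auto
  have "hyp_mean K B f (Suc r)
      = (real (Suc r) * hyp_sum K B f (Suc r)) / (real ((K + B) choose Suc r) * real (Suc r))"
    unfolding hyp_mean_def by simp
  also have "\<dots> = (real (K + B - r) * hyp_sum K B f r + D) / (real ((K + B) choose r) * real (K + B - r))"
    unfolding rec real_choose_Suc_mult ..
  also have "\<dots> = hyp_mean K B f r + D / (real (K + B - r) * real ((K + B) choose r))"
    unfolding hyp_mean_def using pos
    by (simp add: add_divide_distrib mult.commute[of "real (K + B - r)"])
  finally show ?thesis unfolding D_def by simp
qed

lemma hyp_weight_ratio:
  assumes "x < r"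
  shows "hyp_weight K B r x * (real (K - x) * real (r - x))
       \<le> hyp_weight K B r (Suc x) * (real (Suc x) * (real B + real x + 1))"
proof -
  obtain y where y: "r - x = Suc y" "r - Suc x = y" using assms by (metis Suc_diff_Suc)
  have "hyp_weight K B r x * (real (K - x) * real (r - x))
      = (real (K choose x) * real (K - x)) * (real (B choose Suc y) * real (Suc y))"
    unfolding hyp_weight_def y by (simp add: algebra_simps)
  also have "\<dots> = (real (K choose Suc x) * real (Suc x)) * (real (B choose y) * real (B - y))"
    unfolding real_choose_Suc_mult ..
  also have "\<dots> \<le> (real (K choose Suc x) * real (Suc x)) * (real (B choose y) * (real B + real x + 1))"
    by (intro mult_left_mono) auto
  also have "\<dots> = hyp_weight K B r (Suc x) * (real (Suc x) * (real B + real x + 1))"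
    unfolding hyp_weight_def y by (simp add: algebra_simps)
  finally show ?thesis .
qed

lemma hyp_weight_almost_increasing:
  assumes "real x + 1 < X" "X \<le> real K" "X \<le> real r0" "r0 \<le> r" "\<eta> \<le> 1"
    and quad: "(1 - \<eta>) * X * (real B + X) \<le> (real K - X) * (real r0 - X)"
  shows "(1 - \<eta>) * hyp_weight K B r x \<le> hyp_weight K B r (Suc x)"
proof -
  have "(1 - \<eta>) * (real (Suc x) * (real B + real x + 1)) \<le> (1 - \<eta>) * (X * (real B + X))"
    using assms by (intro mult_left_mono mult_mono) auto
  also have "\<dots> \<le> (real K - X) * (real r0 - X)" using quad by (simp add: mult.assoc)
  also have "\<dots> \<le> real (K - x) * real (r - x)"
    using assms by (intro mult_mono) (auto simp: of_nat_diff)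
  finally have "hyp_weight K B r x * ((1 - \<eta>) * (real (Suc x) * (real B + real x + 1)))
      \<le> hyp_weight K B r x * (real (K - x) * real (r - x))"
    by (rule mult_left_mono[OF _ hyp_weight_nonneg])
  hence "((1 - \<eta>) * hyp_weight K B r x) * (real (Suc x) * (real B + real x + 1))
      \<le> hyp_weight K B r x * (real (K - x) * real (r - x))"
    by (simp add: algebra_simps)
  also have "\<dots> \<le> hyp_weight K B r (Suc x) * (real (Suc x) * (real B + real x + 1))"
    by (rule hyp_weight_ratio) (use assms in linarith)
  finally show ?thesis by (rule mult_right_le_imp_le) simp
qed

lemma geometric_lower_bound:
  fixes g :: "nat \<Rightarrow> real"
  assumes "0 \<le> q" "\<And>i. i < M \<Longrightarrow> q * g (x0 + i) \<le> g (x0 + Suc i)" "i \<le> M"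
  shows "q ^ i * g x0 \<le> g (x0 + i)"
  using assms(3)
proof (induction i)
  case (Suc i)
  have "q ^ Suc i * g x0 = q * (q ^ i * g x0)" by simp
  also have "\<dots> \<le> q * g (x0 + i)" using Suc assms(1) by (intro mult_left_mono) auto
  also have "\<dots> \<le> g (x0 + Suc i)" using assms(2) Suc.prems by simp
  finally show ?case .
qed simp

lemma power_bounds_of_relative_increments:
  fixes P :: "nat \<Rightarrow> real"
  assumes "0 \<le> P r0" "0 \<le> \<gamma>" "\<gamma> \<le> 1"
    and step: "\<And>r. r0 \<le> r \<Longrightarrow> r < r1 \<Longrightarrow> \<bar>P (Suc r) - P r\<bar> \<le> \<gamma> * P r"
    and "r0 \<le> r" "r \<le> r1"
  shows "(1 - \<gamma>) ^ (r1 - r0) * P r0 \<le> P r \<and> P r \<le> (1 + \<gamma>) ^ (r1 - r0) * P r0"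
proof -
  have iter: "(1 - \<gamma>) ^ i * P r0 \<le> P (r0 + i) \<and> P (r0 + i) \<le> (1 + \<gamma>) ^ i * P r0"
    if "r0 + i \<le> r1" for i
    using that
  proof (induction i)
    case (Suc i)
    hence IH: "(1 - \<gamma>) ^ i * P r0 \<le> P (r0 + i)" "P (r0 + i) \<le> (1 + \<gamma>) ^ i * P r0" by auto
    have "\<bar>P (r0 + Suc i) - P (r0 + i)\<bar> \<le> \<gamma> * P (r0 + i)" using step Suc.prems by simp
    hence lo: "(1 - \<gamma>) * P (r0 + i) \<le> P (r0 + Suc i)"
      and hi: "P (r0 + Suc i) \<le> (1 + \<gamma>) * P (r0 + i)" by (auto simp: algebra_simps abs_le_iff)
    have "(1 - \<gamma>) ^ Suc i * P r0 \<le> (1 - \<gamma>) * P (r0 + i)"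
      using IH(1) assms(3) by (simp add: mult_left_mono mult.assoc)
    moreover have "(1 + \<gamma>) * P (r0 + i) \<le> (1 + \<gamma>) ^ Suc i * P r0"
      using IH(2) assms(2) by (simp add: mult_left_mono mult.assoc)
    ultimately show ?case using lo hi by linarith
  qed simp
  define i where "i = r - r0"
  have i: "r = r0 + i" "i \<le> r1 - r0" using assms(5,6) unfolding i_def by auto
  have "(1 - \<gamma>) ^ (r1 - r0) \<le> (1 - \<gamma>) ^ i" by (rule power_decreasing) (use i assms in auto)
  moreover have "(1 + \<gamma>) ^ i \<le> (1 + \<gamma>) ^ (r1 - r0)" by (rule power_increasing) (use i assms in auto)
  ultimately have "(1 - \<gamma>) ^ (r1 - r0) * P r0 \<le> (1 - \<gamma>) ^ i * P r0"
    and "(1 + \<gamma>) ^ i * P r0 \<le> (1 + \<gamma>) ^ (r1 - r0) * P r0"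
    using assms(1) by (auto intro: mult_right_mono)
  thus ?thesis using iter[of i] i assms(6) by auto
qed

text \<open>Abstracts the shape of \<open>exp_tail\<close>, defined below.\<close>

locale threshold_geometric =
  fixes f :: "nat \<Rightarrow> real" and x0 :: nat and lam :: real
  assumes vanish: "x \<le> x0 \<Longrightarrow> f x = 0"
    and step: "x \<noteq> x0 \<Longrightarrow> f (Suc x) = lam * f x"
    and lam_pos: "0 < lam"
    and jump_nonneg: "0 \<le> f (Suc x0)"
begin

lemma nonneg: "0 \<le> f x"
proof (induction x)
  case (Suc x) thus ?case using step[of x] jump_nonneg lam_pos by (cases "x = x0") auto
qed (simp add: vanish)

lemma after_jump: "f (Suc x0 + i) = lam ^ i * f (Suc x0)"
  by (induction i) (simp_all add: step)

lemma min_le_Suc: "min 1 lam * f x \<le> f (Suc x)"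
proof (cases "x = x0")
  case True thus ?thesis using vanish[of x0] jump_nonneg by simp
next
  case False thus ?thesis using step[of x] nonneg[of x] by (simp add: mult_right_mono)
qed

lemma Suc_le_max: "f (Suc x) \<le> max 1 lam * f x + (if x = x0 then f (Suc x0) else 0)"
proof (cases "x = x0")
  case True thus ?thesis using vanish[of x0] by simp
next
  case False thus ?thesis using step[of x] nonneg[of x] by (simp add: mult_right_mono)
qed

lemma increment_abs_le: "\<bar>f (Suc x) - f x\<bar> \<le> \<bar>lam - 1\<bar> * f x + (if x = x0 then f (Suc x0) else 0)"
proof (cases "x = x0")
  case False
  hence "f (Suc x) - f x = (lam - 1) * f x" using step[of x] by (simp add: algebra_simps)
  thus ?thesis using False nonneg[of x] by (simp add: abs_mult)
qed (simp add: vanish jump_nonneg)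

text \<open>Since the weights decay at most geometrically over \<open>M\<close> steps past \<open>x0\<close>, the mass at the jump
  is a \<open>O(1/M)\<close> fraction of the whole sum.\<close>

lemma jump_le_hyp_sum:
  assumes lam_pow: "\<And>i. i \<le> M \<Longrightarrow> 1/2 \<le> lam ^ i"
    and "0 \<le> \<eta>" "real M * \<eta> \<le> 1/2" "0 < M" "x0 + M \<le> r"
    and ratio: "\<And>i. i < M \<Longrightarrow> (1 - \<eta>) * hyp_weight K B r (x0 + i) \<le> hyp_weight K B r (x0 + Suc i)"
  shows "hyp_weight K B r x0 * f (Suc x0) \<le> 4 / real M * hyp_sum K B f r"
proof -
  have "1 * \<eta> \<le> real M * \<eta>" using assms(2,4) by (intro mult_right_mono) auto
  hence "\<eta> \<le> 1" using assms(3) by simp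
  have term_ge: "1/4 * (hyp_weight K B r x0 * f (Suc x0)) \<le> hyp_weight K B r (x0 + i) * f (x0 + i)"
    if i: "i \<in> {1..M}" for i
  proof -
    have "1/2 \<le> 1 - real i * \<eta>" using i assms(2,3) mult_right_mono[of "real i" "real M" \<eta>] by auto
    also have "\<dots> \<le> (1 - \<eta>) ^ i" using Bernoulli_inequality[of "- \<eta>" i] \<open>\<eta> \<le> 1\<close> by simp
    finally have "1/2 * hyp_weight K B r x0 \<le> (1 - \<eta>) ^ i * hyp_weight K B r x0"
      by (rule mult_right_mono[OF _ hyp_weight_nonneg])
    also have "\<dots> \<le> hyp_weight K B r (x0 + i)"
      by (rule geometric_lower_bound[OF _ ratio]) (use i \<open>\<eta> \<le> 1\<close> in auto)
    finally have weight: "1/2 * hyp_weight K B r x0 \<le> hyp_weight K B r (x0 + i)" .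
    obtain i' where i': "i = Suc i'" using i by (cases i) auto
    have "1/2 * f (Suc x0) \<le> lam ^ i' * f (Suc x0)"
      by (rule mult_right_mono[OF lam_pow jump_nonneg]) (use i i' in auto)
    hence height: "1/2 * f (Suc x0) \<le> f (x0 + i)" using after_jump[of i'] i' by simp
    have "1/4 * (hyp_weight K B r x0 * f (Suc x0)) = (1/2 * hyp_weight K B r x0) * (1/2 * f (Suc x0))"
      by simp
    also have "\<dots> \<le> hyp_weight K B r (x0 + i) * f (x0 + i)"
      by (rule mult_mono[OF weight height]) (auto simp: hyp_weight_nonneg nonneg jump_nonneg)
    finally show ?thesis .
  qed
  have "real M * (1/4 * (hyp_weight K B r x0 * f (Suc x0)))
      = (\<Sum>i\<in>{1..M}. 1/4 * (hyp_weight K B r x0 * f (Suc x0)))" by simp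
  also have "\<dots> \<le> (\<Sum>i\<in>{1..M}. hyp_weight K B r (x0 + i) * f (x0 + i))"
    by (rule sum_mono) (rule term_ge)
  also have "\<dots> = (\<Sum>x\<in>(\<lambda>i. x0 + i) ` {1..M}. hyp_weight K B r x * f x)"
    by (subst sum.reindex) (auto simp: inj_on_def)
  also have "\<dots> \<le> hyp_sum K B f r" unfolding hyp_sum_def
    by (rule sum_mono2) (use assms(5) in \<open>auto intro: mult_nonneg_nonneg hyp_weight_nonneg nonneg\<close>)
  finally show ?thesis using assms(4) by (simp add: field_simps)
qed

lemma hyp_mean_step:
  assumes "r < K + B" "x0 \<le> r"
    and jump: "hyp_weight K B r x0 * f (Suc x0) \<le> e * hyp_sum K B f r"
  shows "\<bar>hyp_mean K B f (Suc r) - hyp_mean K B f r\<bar>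
         \<le> real K / real (K + B - r) * (\<bar>lam - 1\<bar> + e) * hyp_mean K B f r"
proof -
  define D where "D = (\<Sum>x\<le>r. hyp_weight K B r x * real (K - x) * (f (Suc x) - f x))"
  have "\<bar>D\<bar> \<le> (\<Sum>x\<le>r. real K * (hyp_weight K B r x *
                   (\<bar>lam - 1\<bar> * f x + (if x = x0 then f (Suc x0) else 0))))"
    unfolding D_def
  proof (rule order_trans[OF sum_abs sum_mono])
    fix x
    have "\<bar>hyp_weight K B r x * real (K - x) * (f (Suc x) - f x)\<bar>
        = hyp_weight K B r x * real (K - x) * \<bar>f (Suc x) - f x\<bar>"
      by (simp add: abs_mult hyp_weight_nonneg)
    also have "\<dots> \<le> hyp_weight K B r x * real K * (\<bar>lam - 1\<bar> * f x + (if x = x0 then f (Suc x0) else 0))"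
      by (intro mult_mono increment_abs_le) (auto simp: hyp_weight_nonneg)
    finally show "\<bar>hyp_weight K B r x * real (K - x) * (f (Suc x) - f x)\<bar>
        \<le> real K * (hyp_weight K B r x * (\<bar>lam - 1\<bar> * f x + (if x = x0 then f (Suc x0) else 0)))"
      by (simp add: algebra_simps)
  qed
  also have "\<dots> = real K * hyp_sum K B (\<lambda>x. \<bar>lam - 1\<bar> * f x + (if x = x0 then f (Suc x0) else 0)) r"
    by (simp add: hyp_sum_def sum_distrib_left)
  also have "\<dots> = real K * (\<bar>lam - 1\<bar> * hyp_sum K B f r + hyp_weight K B r x0 * f (Suc x0))"
    using assms(2) by (simp add: hyp_sum_scale_add_point)
  also have "\<dots> \<le> real K * ((\<bar>lam - 1\<bar> + e) * hyp_sum K B f r)"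
    using jump by (intro mult_left_mono) (auto simp: algebra_simps)
  finally have D_le: "\<bar>D\<bar> \<le> real K * ((\<bar>lam - 1\<bar> + e) * hyp_sum K B f r)" .
  have pos: "0 < real (K + B - r)" "0 < real ((K + B) choose r)" using assms(1) by auto
  have "\<bar>hyp_mean K B f (Suc r) - hyp_mean K B f r\<bar> = \<bar>D\<bar> / (real (K + B - r) * real ((K + B) choose r))"
    unfolding hyp_mean_Suc[OF assms(1)] D_def[symmetric] using pos by (simp add: abs_divide)
  also have "\<dots> \<le> real K * ((\<bar>lam - 1\<bar> + e) * hyp_sum K B f r) / (real (K + B - r) * real ((K + B) choose r))"
    using D_le pos by (intro divide_right_mono) auto
  also have "\<dots> = real K / real (K + B - r) * (\<bar>lam - 1\<bar> + e) * hyp_mean K B f r"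
    unfolding hyp_mean_def by simp
  finally show ?thesis .
qed

lemma hyp_mean_window_bounds:
  assumes lam_pow: "\<And>i. i \<le> M \<Longrightarrow> 1/2 \<le> lam ^ i"
    and M: "0 < M" and \<eta>: "0 \<le> \<eta>" "real M * \<eta> \<le> 1/2"
    and window: "x0 + M \<le> r0" "r1 < K + B"
    and ratio: "\<And>r i. r0 \<le> r \<Longrightarrow> r \<le> r1 \<Longrightarrow> i < M \<Longrightarrow>
                  (1 - \<eta>) * hyp_weight K B r (x0 + i) \<le> hyp_weight K B r (x0 + Suc i)"
    and \<gamma>: "real K / real (K + B - r1) * (\<bar>lam - 1\<bar> + 4 / real M) \<le> \<gamma>" "\<gamma> \<le> 1"
    and r: "r0 \<le> r" "r \<le> r1"
  shows "(1 - \<gamma>) ^ (r1 - r0) * hyp_mean K B f r0 \<le> hyp_mean K B f r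
       \<and> hyp_mean K B f r \<le> (1 + \<gamma>) ^ (r1 - r0) * hyp_mean K B f r0"
proof (rule power_bounds_of_relative_increments[OF hyp_mean_nonneg[OF nonneg] _ \<gamma>(2) _ r])
  show "0 \<le> \<gamma>" by (rule order_trans[OF _ \<gamma>(1)]) simp
  fix r' assume r': "r0 \<le> r'" "r' < r1"
  have "\<bar>hyp_mean K B f (Suc r') - hyp_mean K B f r'\<bar>
      \<le> real K / real (K + B - r') * (\<bar>lam - 1\<bar> + 4 / real M) * hyp_mean K B f r'"
    by (rule hyp_mean_step[OF _ _ jump_le_hyp_sum[OF lam_pow \<eta> M _ ratio]]) (use window r' in auto)
  also have "\<dots> \<le> \<gamma> * hyp_mean K B f r'"
  proof (rule mult_right_mono[OF order_trans[OF _ \<gamma>(1)] hyp_mean_nonneg[OF nonneg]])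
    show "real K / real (K + B - r') * (\<bar>lam - 1\<bar> + 4 / real M)
        \<le> real K / real (K + B - r1) * (\<bar>lam - 1\<bar> + 4 / real M)"
      using window r' by (intro mult_right_mono divide_left_mono) auto
  qed
  finally show "\<bar>hyp_mean K B f (Suc r') - hyp_mean K B f r'\<bar> \<le> \<gamma> * hyp_mean K B f r'" .
qed

end

definition two_subsets :: "'a set \<Rightarrow> 'a set set" where
  "two_subsets V = {e. e \<subseteq> V \<and> card e = 2}"

definition star :: "'a set \<Rightarrow> 'a \<Rightarrow> 'a set set" where
  "star V v = {e \<in> two_subsets V. v \<in> e}"

lemma finite_two_subsets: "finite V \<Longrightarrow> finite (two_subsets V)"
  unfolding two_subsets_def by (rule finite_subset[of _ "Pow V"]) auto

lemma card_two_subsets: "finite V \<Longrightarrow> card (two_subsets V) = card V choose 2"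
  unfolding two_subsets_def by (rule n_subsets)

lemma all_edges_eq_two_subsets: "all_edges n = two_subsets {1..n}"
proof
  show "all_edges n \<subseteq> two_subsets {1..n}" unfolding all_edges_def two_subsets_def by auto
  show "two_subsets {1..n} \<subseteq> all_edges n"
  proof
    fix e assume "e \<in> two_subsets {1..n}"
    then obtain x y where e: "e = {x, y}" "x \<noteq> y" "e \<subseteq> {1..n}"
      unfolding two_subsets_def card_2_iff by auto
    show "e \<in> all_edges n"
    proof (cases "x < y")
      case True thus ?thesis using e unfolding all_edges_def by auto
    next
      case False hence "y < x" using e(2) by auto
      thus ?thesis using e unfolding all_edges_def by (auto simp: insert_commute)
    qed
  qed
qed

lemma Gnm_eq: "Gnm n m = {E. E \<subseteq> two_subsets {1..n} \<and> card E = m}"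
  by (simp add: Gnm_def all_edges_eq_two_subsets)

lemma two_subsets_split: "two_subsets V = star V v \<union> two_subsets (V - {v})"
  and star_disjoint_two_subsets: "star V v \<inter> two_subsets (V - {v}) = {}"
  unfolding star_def two_subsets_def by auto

lemma star_eq_image: "v \<in> V \<Longrightarrow> star V v = (\<lambda>x. {v, x}) ` (V - {v})"
proof (intro equalityI subsetI)
  fix e assume "e \<in> star V v"
  then obtain x y where "e = {x, y}" "x \<noteq> y" "e \<subseteq> V" "v \<in> e"
    unfolding star_def two_subsets_def card_2_iff by auto
  thus "e \<in> (\<lambda>x. {v, x}) ` (V - {v})" by (auto simp: insert_commute)
qed (auto simp: star_def two_subsets_def)

lemma finite_star: "finite V \<Longrightarrow> finite (star V v)"
  unfolding star_def by (simp add: finite_two_subsets)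

lemma card_star: "finite V \<Longrightarrow> v \<in> V \<Longrightarrow> card (star V v) = card V - 1"
proof -
  assume "finite V" "v \<in> V"
  moreover have "inj_on (\<lambda>x. {v, x}) (V - {v})" by (auto simp: inj_on_def doubleton_eq_iff)
  ultimately show ?thesis by (simp add: star_eq_image card_image)
qed

lemma deg_eq_card_star: "E \<subseteq> two_subsets V \<Longrightarrow> deg E v = card (E \<inter> star V v)"
  unfolding deg_def star_def by (rule arg_cong[where f = card]) auto

lemma deg_remove_vertex_bounds:
  assumes "finite V" "E \<subseteq> two_subsets V" "u \<noteq> v"
  shows "deg (E \<inter> two_subsets (V - {u})) v \<le> deg E v"
    and "deg E v \<le> deg (E \<inter> two_subsets (V - {u})) v + 1"
proof -
  have fin: "finite E" using assms finite_two_subsets finite_subset by blast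
  show "deg (E \<inter> two_subsets (V - {u})) v \<le> deg E v"
    unfolding deg_def by (rule card_mono) (use fin in auto)
  have "{e \<in> E. v \<in> e} \<subseteq> insert {u, v} {e \<in> E \<inter> two_subsets (V - {u}). v \<in> e}"
  proof
    fix e assume e: "e \<in> {e \<in> E. v \<in> e}"
    show "e \<in> insert {u, v} {e \<in> E \<inter> two_subsets (V - {u}). v \<in> e}"
    proof (cases "u \<in> e")
      case True
      obtain x y where "e = {x, y}" "x \<noteq> y" using e assms(2) unfolding two_subsets_def card_2_iff by blast
      hence "e = {u, v}" using True e assms(3) by auto
      thus ?thesis by simp
    next
      case False
      hence "e \<in> two_subsets (V - {u})" using e assms(2) unfolding two_subsets_def by auto
      thus ?thesis using e by simp
    qed
  qed
  hence "deg E v \<le> card (insert {u, v} {e \<in> E \<inter> two_subsets (V - {u}). v \<in> e})"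
    unfolding deg_def by (rule card_mono[rotated]) (use fin in auto)
  also have "\<dots> \<le> deg (E \<inter> two_subsets (V - {u})) v + 1"
    unfolding deg_def using fin by (simp add: card_insert_if)
  finally show "deg E v \<le> deg (E \<inter> two_subsets (V - {u})) v + 1" .
qed

subsection \<open>Conditioning on the degree of a vertex\<close>

lemma deg_fiber_eq_split_subsets:
  "{E. E \<subseteq> two_subsets V \<and> card E = m \<and> deg E v = j} =
   {E. E \<subseteq> star V v \<union> two_subsets (V - {v}) \<and> card E = m \<and> card (E \<inter> star V v) = j}"
  using two_subsets_split[of V v] deg_eq_card_star[of _ V v] by auto

lemma card_deg_fiber:
  assumes "finite V" "v \<in> V" "j \<le> m"
  shows "card {E. E \<subseteq> two_subsets V \<and> card E = m \<and> deg E v = j}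
         = (card V - 1 choose j) * ((card V - 1 choose 2) choose (m - j))"
  unfolding deg_fiber_eq_split_subsets using assms
  by (subst card_split_subsets)
     (simp_all add: finite_star finite_two_subsets star_disjoint_two_subsets card_star card_two_subsets)

lemma sum_deg_fiber:
  fixes g :: "nat set set \<Rightarrow> real"
  assumes "finite V" "v \<in> V" "j \<le> m"
  shows "(\<Sum>E | E \<subseteq> two_subsets V \<and> card E = m \<and> deg E v = j. g (E \<inter> two_subsets (V - {v})))
         = real (card V - 1 choose j) * (\<Sum>R | R \<subseteq> two_subsets (V - {v}) \<and> card R = m - j. g R)"
  unfolding deg_fiber_eq_split_subsets using assms
  by (subst sum_split_subsets) (simp_all add: finite_star finite_two_subsets star_disjoint_two_subsets card_star)

lemma sum_subsets_deg_eq_hyp_sum: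
  fixes f :: "nat \<Rightarrow> real"
  assumes V: "finite V" "v \<in> V"
  shows "(\<Sum>R | R \<subseteq> two_subsets V \<and> card R = r. f (deg R v))
         = hyp_sum (card V - 1) ((card V - 1) choose 2) f r"
proof -
  let ?S = "{R. R \<subseteq> two_subsets V \<and> card R = r}"
  have fin: "finite ?S" by (rule finite_subset[of _ "Pow (two_subsets V)"]) (auto simp: V finite_two_subsets)
  have deg_le: "deg R v \<in> {..r}" if "R \<in> ?S" for R
  proof -
    have "finite R" using that V finite_two_subsets finite_subset by auto
    thus ?thesis using that unfolding deg_def by (auto intro: order_trans[OF card_mono])
  qed
  have "(\<Sum>R\<in>?S. f (deg R v)) = (\<Sum>x\<le>r. \<Sum>R\<in>{R \<in> ?S. deg R v = x}. f (deg R v))"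
    by (rule sum.group[OF fin _ image_subsetI[OF deg_le], symmetric]) simp
  also have "\<dots> = (\<Sum>x\<le>r. hyp_weight (card V - 1) ((card V - 1) choose 2) r x * f x)"
  proof (rule sum.cong[OF refl])
    fix x assume "x \<in> {..r}"
    have "{R \<in> ?S. deg R v = x} = {R. R \<subseteq> two_subsets V \<and> card R = r \<and> deg R v = x}" by auto
    hence "card {R \<in> ?S. deg R v = x} = (card V - 1 choose x) * ((card V - 1 choose 2) choose (r - x))"
      using card_deg_fiber[OF V] \<open>x \<in> {..r}\<close> by simp
    thus "(\<Sum>R\<in>{R \<in> ?S. deg R v = x}. f (deg R v)) = hyp_weight (card V - 1) ((card V - 1) choose 2) r x * f x"
      by (simp add: hyp_weight_def)
  qed
  finally show ?thesis unfolding hyp_sum_def .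
qed

lemma remove_first_atLeastAtMost: "{a..b} - {a} = {Suc a..(b::nat)}"
  by auto

lemma Gnm_deg_fiber:
  "{E \<in> Gnm n m. deg E v = j} = {E. E \<subseteq> two_subsets {1..n} \<and> card E = m \<and> deg E v = j}"
  by (auto simp: Gnm_eq)

lemma finite_Gnm: "finite (Gnm n m)"
  unfolding Gnm_eq
  by (rule finite_subset[of _ "Pow (two_subsets {1..n})"]) (auto simp: finite_two_subsets)

lemma card_Gnm_deg1:
  assumes "1 \<le> n" "j \<le> m"
  shows "card {E \<in> Gnm n m. deg E 1 = j} = (n - 1 choose j) * ((n - 1 choose 2) choose (m - j))"
  unfolding Gnm_deg_fiber using card_deg_fiber[of "{1..n}" 1 j m] assms by simp

lemma deg1_less_of_Gnm:
  assumes "E \<in> Gnm n m" "1 \<le> n"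
  shows "deg E 1 < n"
proof -
  have "deg E 1 = card (E \<inter> star {1..n} 1)" using assms(1) by (simp add: Gnm_eq deg_eq_card_star)
  also have "\<dots> \<le> card (star {1..n} 1)" by (intro card_mono finite_star) auto
  also have "\<dots> = n - 1" using assms(2) by (simp add: card_star)
  finally show ?thesis using assms(2) by simp
qed

lemma deg2_of_Gnm:
  assumes "E \<in> Gnm n m"
  shows "deg E 2 = deg (E \<inter> two_subsets {2..n}) 2 \<or> deg E 2 = Suc (deg (E \<inter> two_subsets {2..n}) 2)"
  using deg_remove_vertex_bounds[of "{1..n}" E 1 2] assms
  by (force simp: Gnm_eq remove_first_atLeastAtMost numeral_2_eq_2)

lemma sum_Gnm_deg1_rest:
  fixes g :: "nat \<Rightarrow> real"
  assumes "2 \<le> n" "j \<le> m"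
  shows "(\<Sum>E | E \<in> Gnm n m \<and> deg E 1 = j. g (deg (E \<inter> two_subsets {2..n}) 2))
         = real (n - 1 choose j) * hyp_sum (n - 2) ((n - 2) choose 2) g (m - j)"
proof -
  have "{E \<in> Gnm n m. deg E 1 = j} = {E. E \<subseteq> two_subsets {1..n} \<and> card E = m \<and> deg E 1 = j}"
    by (rule Gnm_deg_fiber)
  moreover have "(\<Sum>R | R \<subseteq> two_subsets {2..n} \<and> card R = m - j. g (deg R 2))
      = hyp_sum (n - 2) ((n - 2) choose 2) g (m - j)"
    using sum_subsets_deg_eq_hyp_sum[of "{2..n}" 2 g "m - j"] assms by (simp add: numeral_2_eq_2)
  ultimately show ?thesis
    using sum_deg_fiber[of "{1..n}" 1 j m "\<lambda>R. g (deg R 2)"] assms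
    by (simp add: remove_first_atLeastAtMost numeral_2_eq_2)
qed

definition deg1_deviation :: "nat \<Rightarrow> nat \<Rightarrow> (nat set set \<Rightarrow> real) \<Rightarrow> real" where
  "deg1_deviation n m F = Sup ((\<lambda>j. \<bar>Gcondexp n m F (\<lambda>E. deg E 1 = j) / Gexp n m F - 1\<bar>)
                                 ` {j. j < n \<and> Gprob n m (\<lambda>E. deg E 1 = j) > 0})"

lemma abs_divide_minus_one_le:
  fixes L U x y :: real
  assumes "0 < L" "L \<le> x" "x \<le> U" "L \<le> y" "y \<le> U"
  shows "\<bar>x / y - 1\<bar> \<le> U / L - 1"
proof -
  have "x / y \<le> U / L" "L / U \<le> x / y" using assms by (auto intro: frac_le)
  moreover have "2 - U / L \<le> L / U"
  proof -
    define q where "q = U / L"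
    have "0 < q" using assms unfolding q_def by simp
    moreover have "(2 - q) * q = 1 - (q - 1)^2" by (simp add: power2_eq_square algebra_simps)
    ultimately have "2 - q \<le> 1 / q" by (simp add: pos_le_divide_eq)
    thus ?thesis unfolding q_def by simp
  qed
  ultimately show ?thesis by (simp add: abs_le_iff)
qed

text \<open>The unconditional mean of \<open>F\<close> is a mixture of the conditional ones, so it lies in \<open>[L, U]\<close> too.\<close>

lemma deg1_deviation_le:
  assumes "1 \<le> n" "0 < L" "{E \<in> Gnm n m. deg E 1 = 0} \<noteq> {}"
    and fiber: "\<And>j. j < n \<Longrightarrow>
        real (card {E \<in> Gnm n m. deg E 1 = j}) * L \<le> (\<Sum>E | E \<in> Gnm n m \<and> deg E 1 = j. F E) \<and>
        (\<Sum>E | E \<in> Gnm n m \<and> deg E 1 = j. F E) \<le> real (card {E \<in> Gnm n m. deg E 1 = j}) * U"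
  shows "0 \<le> deg1_deviation n m F \<and> deg1_deviation n m F \<le> U / L - 1"
proof -
  define A where "A j = {E \<in> Gnm n m. deg E 1 = j}" for j
  have fin: "finite (A j)" for j unfolding A_def using finite_Gnm by simp
  have card_A0: "0 < card (A 0)" using assms(3) fin[of 0] unfolding A_def by (simp add: card_gt_0_iff)
  have image: "(\<lambda>E. deg E 1) ` Gnm n m \<subseteq> {..<n}" using deg1_less_of_Gnm assms(1) by blast
  have sum_Gnm: "(\<Sum>E\<in>Gnm n m. h E) = (\<Sum>j<n. \<Sum>E\<in>A j. h E)" for h :: "nat set set \<Rightarrow> real"
    unfolding A_def by (rule sum.group[OF finite_Gnm _ image, symmetric]) simp
  have card_Gnm: "real (card (Gnm n m)) = (\<Sum>j<n. real (card (A j)))"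
    using sum_Gnm[of "\<lambda>_. 1"] by simp
  have "card (A 0) \<le> card (Gnm n m)" unfolding A_def by (intro card_mono finite_Gnm) auto
  hence Gnm_pos: "0 < real (card (Gnm n m))" using card_A0 by simp
  have "real (card (Gnm n m)) * L \<le> (\<Sum>E\<in>Gnm n m. F E)" "(\<Sum>E\<in>Gnm n m. F E) \<le> real (card (Gnm n m)) * U"
    unfolding card_Gnm sum_distrib_right sum_Gnm[of F]
    using fiber unfolding A_def by (auto intro!: sum_mono)
  hence mean: "L \<le> Gexp n m F" "Gexp n m F \<le> U"
    unfolding Gexp_def using Gnm_pos by (simp_all add: pos_le_divide_eq pos_divide_le_eq mult.commute)
  define I where "I = {j. j < n \<and> Gprob n m (\<lambda>E. deg E 1 = j) > 0}"
  have cond: "L \<le> Gcondexp n m F (\<lambda>E. deg E 1 = j) \<and> Gcondexp n m F (\<lambda>E. deg E 1 = j) \<le> U"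
    if "j \<in> I" for j
  proof -
    have "0 < card (A j)" "j < n" using that unfolding I_def Gprob_def A_def by (auto intro: gr0I)
    thus ?thesis using fiber[of j] unfolding Gcondexp_def A_def
      by (simp add: pos_le_divide_eq pos_divide_le_eq mult.commute)
  qed
  have I0: "0 \<in> I" unfolding I_def Gprob_def using card_A0 Gnm_pos assms(1) unfolding A_def by simp
  have "finite I" unfolding I_def by (rule finite_subset[of _ "{..<n}"]) auto
  have "\<bar>Gcondexp n m F (\<lambda>E. deg E 1 = j) / Gexp n m F - 1\<bar> \<le> U / L - 1" if "j \<in> I" for j
    using cond[OF that] mean assms(2) by (intro abs_divide_minus_one_le) auto
  hence "deg1_deviation n m F \<le> U / L - 1"
    unfolding deg1_deviation_def I_def[symmetric] by (intro cSup_least) (use I0 in auto)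
  moreover have "0 \<le> deg1_deviation n m F"
    unfolding deg1_deviation_def I_def[symmetric]
    by (rule order_trans[OF _ le_cSup_finite[OF finite_imageI[OF \<open>finite I\<close>] imageI[OF I0]]]) simp
  ultimately show ?thesis by simp
qed

context threshold_geometric
begin

lemma f_deg2_bounds:
  assumes "E \<in> Gnm n m"
  defines "d \<equiv> deg (E \<inter> two_subsets {2..n}) 2"
  shows "min 1 lam * f d \<le> f (deg E 2)"
    and "f (deg E 2) \<le> max 1 lam * f d + (if d = x0 then f (Suc x0) else 0)"
proof -
  have "min 1 lam * f d \<le> f d" using lam_pos nonneg by (intro mult_left_le_one_le) auto
  moreover have "f d \<le> max 1 lam * f d + (if d = x0 then f (Suc x0) else 0)"
    using nonneg[of d] jump_nonneg mult_right_mono[of 1 "max 1 lam" "f d"] by auto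
  ultimately show "min 1 lam * f d \<le> f (deg E 2)"
    and "f (deg E 2) \<le> max 1 lam * f d + (if d = x0 then f (Suc x0) else 0)"
    using deg2_of_Gnm[OF assms(1)] min_le_Suc[of d] Suc_le_max[of d] unfolding d_def by auto
qed

lemma sum_Gnm_deg1_bounds:
  fixes n m j :: nat and L U e :: real
  defines "K \<equiv> n - 2" and "B \<equiv> (n - 2) choose 2"
  assumes n: "2 \<le> n" "j < n" "n \<le> m" "m \<le> K + B" "x0 \<le> m - (n - 1)" "0 \<le> e"
    and mean: "\<And>r. m - (n - 1) \<le> r \<Longrightarrow> r \<le> m \<Longrightarrow> L \<le> hyp_mean K B f r \<and> hyp_mean K B f r \<le> U"
    and jump: "\<And>r. m - (n - 1) \<le> r \<Longrightarrow> r \<le> m \<Longrightarrow>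
                 hyp_weight K B r x0 * f (Suc x0) \<le> e * hyp_sum K B f r"
  shows "real (card {E \<in> Gnm n m. deg E 1 = j}) * (min 1 lam * L)
           \<le> (\<Sum>E | E \<in> Gnm n m \<and> deg E 1 = j. f (deg E 2))
       \<and> (\<Sum>E | E \<in> Gnm n m \<and> deg E 1 = j. f (deg E 2))
           \<le> real (card {E \<in> Gnm n m. deg E 1 = j}) * ((max 1 lam + e) * U)"
proof -
  define r where "r = m - j"
  define S where "S = {E \<in> Gnm n m. deg E 1 = j}"
  have r: "m - (n - 1) \<le> r" "r \<le> m" "x0 \<le> r" using n unfolding r_def by auto
  have "n - 1 = Suc (n - 2)" using n by simp
  hence "(n - 1) choose 2 = K + B" unfolding K_def B_def by (simp only: Suc_choose_two)
  hence card_S: "real (card S) = real (n - 1 choose j) * real ((K + B) choose r)"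
    unfolding S_def r_def using n card_Gnm_deg1[of n j m] by simp
  have sum_eq_mean: "hyp_sum K B f r = real ((K + B) choose r) * hyp_mean K B f r"
    unfolding hyp_mean_def using r n(4) by simp
  have scale: "hyp_sum K B (\<lambda>x. c * f x) r = c * hyp_sum K B f r" for c
    using hyp_sum_scale_add_point[OF r(3), of K B c f 0] by simp
  have "min 1 lam * L \<le> min 1 lam * hyp_mean K B f r" using mean[OF r(1,2)] lam_pos by (intro mult_left_mono) auto
  hence "real (card S) * (min 1 lam * L) \<le> real (card S) * (min 1 lam * hyp_mean K B f r)"
    by (rule mult_left_mono) simp
  also have "\<dots> = real (n - 1 choose j) * (min 1 lam * hyp_sum K B f r)"
    unfolding card_S sum_eq_mean by simp
  also have "\<dots> = real (n - 1 choose j) * hyp_sum K B (\<lambda>x. min 1 lam * f x) r"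
    by (simp add: scale)
  also have "\<dots> = (\<Sum>E\<in>S. min 1 lam * f (deg (E \<inter> two_subsets {2..n}) 2))"
    unfolding S_def r_def K_def B_def using sum_Gnm_deg1_rest[of n j m "\<lambda>x. min 1 lam * f x"] n by simp
  also have "\<dots> \<le> (\<Sum>E\<in>S. f (deg E 2))"
    by (rule sum_mono) (use f_deg2_bounds(1) in \<open>auto simp: S_def\<close>)
  finally have lower: "real (card S) * (min 1 lam * L) \<le> (\<Sum>E\<in>S. f (deg E 2))" .
  have "(\<Sum>E\<in>S. f (deg E 2)) \<le> (\<Sum>E\<in>S. (\<lambda>x. max 1 lam * f x + (if x = x0 then f (Suc x0) else 0))
                                          (deg (E \<inter> two_subsets {2..n}) 2))"
    by (rule sum_mono, rule f_deg2_bounds(2)[where m = m]) (simp add: S_def)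
  also have "\<dots> = real (n - 1 choose j) *
      hyp_sum K B (\<lambda>x. max 1 lam * f x + (if x = x0 then f (Suc x0) else 0)) r"
    unfolding S_def r_def K_def B_def using n
    by (intro sum_Gnm_deg1_rest[where g = "\<lambda>x. max 1 lam * f x + (if x = x0 then f (Suc x0) else 0)"]) auto
  also have "\<dots> = real (n - 1 choose j) * (max 1 lam * hyp_sum K B f r + hyp_weight K B r x0 * f (Suc x0))"
    using r by (simp add: hyp_sum_scale_add_point)
  also have "\<dots> \<le> real (n - 1 choose j) * ((max 1 lam + e) * hyp_sum K B f r)"
    using jump[OF r(1,2)] by (intro mult_left_mono) (auto simp: algebra_simps)
  also have "\<dots> = real (card S) * ((max 1 lam + e) * hyp_mean K B f r)"
    unfolding card_S sum_eq_mean by simp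
  also have "\<dots> \<le> real (card S) * ((max 1 lam + e) * U)"
    using mean[OF r(1,2)] n(6) by (intro mult_left_mono) (auto intro: add_nonneg_nonneg)
  finally show ?thesis using lower unfolding S_def by simp
qed

lemma deg1_deviation_bound:
  fixes n m M :: nat and \<eta> \<gamma> :: real
  defines "K \<equiv> n - 2" and "B \<equiv> (n - 2) choose 2"
  assumes n: "4 \<le> n" "n \<le> m" "m \<le> B"
    and jump_pos: "0 < f (Suc x0)"
    and lam_pow: "\<And>i. i \<le> M \<Longrightarrow> 1/2 \<le> lam ^ i"
    and M: "0 < M" and \<eta>: "0 \<le> \<eta>" "real M * \<eta> \<le> 1/2"
    and window: "x0 + M \<le> m - (n - 1)" "x0 + M \<le> K"
    and ratio: "\<And>r i. m - (n - 1) \<le> r \<Longrightarrow> r \<le> m \<Longrightarrow> i < M \<Longrightarrow>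
                  (1 - \<eta>) * hyp_weight K B r (x0 + i) \<le> hyp_weight K B r (x0 + Suc i)"
    and \<gamma>: "real K / real (K + B - m) * (\<bar>lam - 1\<bar> + 4 / real M) \<le> \<gamma>" "\<gamma> < 1"
  shows "0 \<le> deg1_deviation n m (\<lambda>E. f (deg E 2))
       \<and> deg1_deviation n m (\<lambda>E. f (deg E 2))
           \<le> (max 1 lam + 4 / real M) * (1 + \<gamma>) ^ (n - 1) / (min 1 lam * (1 - \<gamma>) ^ (n - 1)) - 1"
proof -
  define r0 where "r0 = m - (n - 1)"
  define P0 where "P0 = hyp_mean K B f r0"
  have m_r0: "m - r0 = n - 1" and "m < K + B" using n unfolding r0_def K_def by auto
  have "0 < hyp_sum K B f r0"
    by (rule hyp_sum_pos[where f = f, OF nonneg jump_pos]) (use n window M in \<open>auto simp: r0_def\<close>)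
  hence P0_pos: "0 < P0" unfolding P0_def hyp_mean_def r0_def using n by simp
  have mean: "(1 - \<gamma>) ^ (n - 1) * P0 \<le> hyp_mean K B f r \<and> hyp_mean K B f r \<le> (1 + \<gamma>) ^ (n - 1) * P0"
    if "r0 \<le> r" "r \<le> m" for r
    using hyp_mean_window_bounds[OF lam_pow M \<eta> window(1)[folded r0_def] \<open>m < K + B\<close> ratio[folded r0_def]
        \<gamma>(1) _ that] \<gamma>(2) unfolding m_r0 P0_def by simp
  have jump: "hyp_weight K B r x0 * f (Suc x0) \<le> 4 / real M * hyp_sum K B f r"
    if "r0 \<le> r" "r \<le> m" for r
    by (rule jump_le_hyp_sum[OF lam_pow \<eta> M]) (use window that ratio in \<open>auto simp: r0_def\<close>)
  have fiber: "real (card {E \<in> Gnm n m. deg E 1 = j}) * (min 1 lam * ((1 - \<gamma>) ^ (n - 1) * P0))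
           \<le> (\<Sum>E | E \<in> Gnm n m \<and> deg E 1 = j. f (deg E 2))
       \<and> (\<Sum>E | E \<in> Gnm n m \<and> deg E 1 = j. f (deg E 2))
           \<le> real (card {E \<in> Gnm n m. deg E 1 = j}) * ((max 1 lam + 4 / real M) * ((1 + \<gamma>) ^ (n - 1) * P0))"
    if "j < n" for j
    using that n window \<open>m < K + B\<close> mean jump unfolding r0_def K_def B_def
    by (intro sum_Gnm_deg1_bounds) auto
  have "n - 1 = Suc (n - 2)" using n by simp
  hence "(n - 1) choose 2 = K + B" unfolding K_def B_def by (simp only: Suc_choose_two)
  hence "card {E \<in> Gnm n m. deg E 1 = 0} \<noteq> 0" using card_Gnm_deg1[of n 0 m] n by simp
  hence "{E \<in> Gnm n m. deg E 1 = 0} \<noteq> {}" by (metis card.empty)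
  moreover have "0 < min 1 lam * ((1 - \<gamma>) ^ (n - 1) * P0)" using lam_pos \<gamma>(2) P0_pos by simp
  ultimately have "0 \<le> deg1_deviation n m (\<lambda>E. f (deg E 2))
      \<and> deg1_deviation n m (\<lambda>E. f (deg E 2))
          \<le> (max 1 lam + 4 / real M) * ((1 + \<gamma>) ^ (n - 1) * P0) / (min 1 lam * ((1 - \<gamma>) ^ (n - 1) * P0)) - 1"
    using n fiber by (intro deg1_deviation_le) auto
  thus ?thesis using P0_pos by (simp add: mult.assoc[symmetric])
qed

end

subsection \<open>Estimates for fixed parameters\<close>

definition exp_tail :: "real \<Rightarrow> real \<Rightarrow> real \<Rightarrow> real \<Rightarrow> nat \<Rightarrow> real" where
  "exp_tail a t \<mu> \<sigma> d = exp (a * ((real d - \<mu>) / \<sigma>)) * (if t \<le> (real d - \<mu>) / \<sigma> then 1 else 0)"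

lemma exp_tail_threshold_geometric:
  fixes a t \<mu> \<sigma> :: real
  defines "x0 \<equiv> nat \<lceil>\<mu> + t * \<sigma>\<rceil> - 1"
  assumes "0 < \<sigma>" "0 < \<mu> + t * \<sigma>"
  shows "threshold_geometric (exp_tail a t \<mu> \<sigma>) x0 (exp (a / \<sigma>))"
    and "real x0 < \<mu> + t * \<sigma>"
    and "0 < exp_tail a t \<mu> \<sigma> (Suc x0)"
proof -
  have x0: "real x0 = real_of_int \<lceil>\<mu> + t * \<sigma>\<rceil> - 1" unfolding x0_def using assms(3) by linarith
  have below: "real x < \<mu> + t * \<sigma>" if "x \<le> x0" for x using that x0 by linarith
  have above: "\<mu> + t * \<sigma> \<le> real (Suc x)" if "x0 \<le> x" for x using that x0 by linarith
  have iff: "t \<le> (real d - \<mu>) / \<sigma> \<longleftrightarrow> \<mu> + t * \<sigma> \<le> real d" for d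
    using assms(2) by (simp add: pos_le_divide_eq algebra_simps)
  show "real x0 < \<mu> + t * \<sigma>" using below by simp
  show "0 < exp_tail a t \<mu> \<sigma> (Suc x0)" using above[of x0] iff[of "Suc x0"] unfolding exp_tail_def by simp
  show "threshold_geometric (exp_tail a t \<mu> \<sigma>) x0 (exp (a / \<sigma>))"
  proof
    show "exp_tail a t \<mu> \<sigma> x = 0" if "x \<le> x0" for x
      using below[OF that] iff[of x] unfolding exp_tail_def by simp
    show "exp_tail a t \<mu> \<sigma> (Suc x) = exp (a / \<sigma>) * exp_tail a t \<mu> \<sigma> x" if "x \<noteq> x0" for x
    proof (cases "x < x0")
      case True thus ?thesis using below[of x] below[of "Suc x"] iff[of x] iff[of "Suc x"]
        unfolding exp_tail_def by simp
    next
      case False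
      hence "\<mu> + t * \<sigma> \<le> real x" "\<mu> + t * \<sigma> \<le> real (Suc x)" using that above[of x] above[of "x - 1"] by auto
      moreover have "exp (a * ((real (Suc x) - \<mu>) / \<sigma>)) = exp (a / \<sigma>) * exp (a * ((real x - \<mu>) / \<sigma>))"
        using assms(2) by (simp add: exp_add[symmetric] field_simps)
      ultimately show ?thesis using iff[of x] iff[of "Suc x"] unfolding exp_tail_def by simp
    qed
    show "0 \<le> exp_tail a t \<mu> \<sigma> (Suc x0)" unfolding exp_tail_def by simp
  qed simp
qed

lemma mu_eq: "2 \<le> n \<Longrightarrow> mu n m = 2 * real m / real n"
  unfolding mu_def pp_def NN_def real_choose_two by (simp add: field_simps)

lemma sigma_bounds:
  assumes "3 \<le> n" "0 < m" "real m < NN n"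
  shows "0 < sigma n m" "(sigma n m)\<^sup>2 \<le> 2 * mu n m"
proof -
  define N p where "N = NN n" and "p = pp n m"
  have N: "3 \<le> N" "real n - 1 < N"
  proof -
    have "2 * (real n - 1) < real n * (real n - 1)" using assms(1) by (intro mult_strict_right_mono) auto
    moreover have "3 * 2 \<le> real n * (real n - 1)" using assms(1) by (intro mult_mono) auto
    ultimately show "3 \<le> N" "real n - 1 < N" unfolding N_def NN_def real_choose_two by auto
  qed
  have p: "0 < p" "p < 1" using assms N unfolding p_def pp_def N_def by (auto simp: divide_less_eq)
  have q1: "0 < N / (N - 1)" "N / (N - 1) \<le> 2" using N by (auto simp: field_simps)
  have q2: "0 < (N - (real n - 1)) / (N - 1)" "(N - (real n - 1)) / (N - 1) \<le> 1" using N assms by (auto simp: field_simps)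
  define c where "c = (1 - p) * (N / (N - 1)) * ((N - (real n - 1)) / (N - 1))"
  have "0 < c" unfolding c_def using p q1 q2 by (intro mult_pos_pos) simp_all
  moreover have "(1 - p) * (N / (N - 1)) \<le> 1 * 2" using p q1 by (intro mult_mono) auto
  hence "c \<le> (1 * 2) * 1" unfolding c_def by (rule mult_mono) (use p q1 q2 in auto)
  ultimately have c: "0 < c" "c \<le> 2" by simp_all
  have mu: "0 < mu n m" using assms p unfolding mu_def p_def[symmetric] by simp
  have sigma_eq: "sigma n m = sqrt (mu n m * c)"
    unfolding sigma_def c_def mu_def N_def[symmetric] p_def[symmetric] by (simp add: mult.assoc)
  show "0 < sigma n m" unfolding sigma_eq using mu c by simp
  show "(sigma n m)\<^sup>2 \<le> 2 * mu n m" unfolding sigma_eq using mu c by (simp add: mult_left_mono mult.commute)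
qed

lemma abs_exp_minus_one_le: "\<bar>y::real\<bar> \<le> 1/2 \<Longrightarrow> \<bar>exp y - 1\<bar> \<le> 2 * \<bar>y\<bar>"
proof (cases "0 \<le> y")
  case True
  moreover assume "\<bar>y\<bar> \<le> 1/2"
  ultimately have "exp y \<le> 1 + 2 * y" by (intro real_exp_bound_lemma) auto
  thus ?thesis using True by simp
next
  case False
  have "1 + y \<le> exp y" "exp y \<le> 1" "\<bar>y\<bar> = - y" using False by (simp_all add: exp_ge_add_one_self)
  thus ?thesis by linarith
qed

lemma exp_small_bounds:
  fixes \<kappa> :: real
  assumes "\<bar>\<kappa>\<bar> \<le> 1 / (2 * real M)" "0 < M"
  shows "\<And>i. i \<le> M \<Longrightarrow> 1/2 \<le> exp \<kappa> ^ i" and "\<bar>exp \<kappa> - 1\<bar> \<le> 1 / real M"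
proof -
  fix i assume "i \<le> M"
  have "\<bar>real i * \<kappa>\<bar> \<le> real M * (1 / (2 * real M))"
    unfolding abs_mult using \<open>i \<le> M\<close> assms(1) by (intro mult_mono) auto
  hence "- 1/2 \<le> real i * \<kappa>" using assms(2) by simp
  thus "1/2 \<le> exp \<kappa> ^ i" using exp_ge_add_one_self[of "real i * \<kappa>"] by (simp add: exp_of_nat_mult)
next
  have "1 / (2 * real M) \<le> 1/2" using assms(2) by (simp add: field_simps)
  hence "\<bar>\<kappa>\<bar> \<le> 1/2" using assms(1) by linarith
  hence "\<bar>exp \<kappa> - 1\<bar> \<le> 2 * \<bar>\<kappa>\<bar>" by (rule abs_exp_minus_one_le)
  also have "\<dots> \<le> 1 / real M" using assms by (simp add: field_simps)
  finally show "\<bar>exp \<kappa> - 1\<bar> \<le> 1 / real M" .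
qed

lemma window_linear_bounds:
  fixes n \<mu> d X :: real
  defines "K \<equiv> n - 2" and "r0 \<equiv> \<mu> * n / 2 - n + 1" and "B \<equiv> (n - 2) * (n - 3) / 2"
  assumes n: "20 \<le> n" and d: "0 < d" "d \<le> 1/256" "2 \<le> d * \<mu>" "8 \<le> d * n" "\<mu> \<le> d / 16 * n"
    and \<mu>: "4 \<le> \<mu>" and X: "X \<le> (1 + d) * \<mu>"
  shows "X \<le> d * K" "X \<le> d * r0" "X \<le> d * B" "(1 - d) * (\<mu> * B) \<le> K * r0"
proof -
  have n_sq: "n * n / 2 \<le> (n - 2) * (n - 3)"
  proof -
    have "0 \<le> n * (n - 10)" using n by simp
    moreover have "(n - 2) * (n - 3) - n * n / 2 = n * (n - 10) / 2 + 6" by (simp add: field_simps)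
    ultimately show ?thesis by linarith
  qed
  have "(1 + d) * \<mu> \<le> 2 * \<mu>" using d \<mu> by (intro mult_right_mono) auto
  hence X2: "X \<le> 2 * \<mu>" using X by simp
  show "X \<le> d * K"
  proof -
    have "2 * \<mu> \<le> d / 8 * n" using d by simp
    also have "\<dots> \<le> d * (n - 2)" using d n by (simp add: field_simps)
    finally show ?thesis using X2 unfolding K_def by simp
  qed
  show "X \<le> d * r0"
  proof -
    have a: "2 * \<mu> \<le> d * n * \<mu> / 4" using mult_right_mono[OF d(4), of \<mu>] \<mu> by simp
    have "d * n * 1 \<le> d * n * (\<mu> / 4)" using d \<mu> by (intro mult_left_mono) auto
    hence b: "d * n \<le> d * n * \<mu> / 4" by simp
    have "d * r0 = d * n * \<mu> / 2 - d * n + d" unfolding r0_def by (simp add: algebra_simps)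
    hence "2 * \<mu> \<le> d * r0" using a b d(1) by linarith
    thus ?thesis using X2 by simp
  qed
  show "X \<le> d * B"
  proof -
    have "2 * \<mu> \<le> d / 8 * n" using d by simp
    also have "\<dots> = d * (n / 8)" by simp
    also have "\<dots> \<le> d * (n * n / 4)" using d n mult_right_mono[of 1 n n] by (intro mult_left_mono) auto
    also have "\<dots> \<le> d * B" unfolding B_def using n_sq d by (intro mult_left_mono) auto
    finally show ?thesis using X2 by simp
  qed
  show "(1 - d) * (\<mu> * B) \<le> K * r0"
  proof -
    have "(1 - d) * \<mu> * (n - 3) \<le> (1 - d) * \<mu> * n" using d \<mu> by (intro mult_left_mono) auto
    also have "\<dots> \<le> \<mu> * n - 2 * n" using mult_right_mono[OF d(3), of n] n by (simp add: algebra_simps)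
    finally have "(1 - d) * \<mu> * (n - 3) * ((n - 2) / 2) \<le> (\<mu> * n - 2 * n + 2) * ((n - 2) / 2)"
      using n by (intro mult_right_mono) auto
    thus ?thesis unfolding K_def r0_def B_def by (simp add: field_simps)
  qed
qed

text \<open>With \<open>K = n - 2\<close>, \<open>B = C(n - 2, 2)\<close>, \<open>r0 = m - (n - 1)\<close> and \<open>X = \<mu> + t\<sigma> + M\<close> these are the
  hypotheses of \<open>hyp_weight_almost_increasing\<close>.\<close>

lemma window_inequalities:
  fixes n \<mu> d X :: real
  defines "K \<equiv> n - 2" and "r0 \<equiv> \<mu> * n / 2 - n + 1" and "B \<equiv> (n - 2) * (n - 3) / 2"
  assumes n: "20 \<le> n" and d: "0 < d" "d \<le> 1/256" "2 \<le> d * \<mu>" "8 \<le> d * n" "\<mu> \<le> d / 16 * n"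
    and \<mu>: "4 \<le> \<mu>" and X: "0 \<le> X" "X \<le> (1 + d) * \<mu>"
  shows "X \<le> K" "X \<le> r0" "(1 - 8 * d) * X * (B + X) \<le> (K - X) * (r0 - X)"
proof -
  have XK: "X \<le> d * K" and Xr: "X \<le> d * r0" and XB: "X \<le> d * B" and \<mu>B: "(1 - d) * (\<mu> * B) \<le> K * r0"
    using window_linear_bounds[OF n d \<mu> X(2)] unfolding K_def r0_def B_def by simp_all
  have K_X: "(1 - d) * K \<le> K - X" and r0_X: "(1 - d) * r0 \<le> r0 - X" using XK Xr by (simp_all add: algebra_simps)
  have r0: "0 \<le> r0" using mult_right_mono[OF \<mu>, of n] n unfolding r0_def by simp
  hence "d * K \<le> K" "d * r0 \<le> r0" using d n unfolding K_def by (auto intro: mult_left_le_one_le)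
  thus X_K: "X \<le> K" and "X \<le> r0" using XK Xr by simp_all
  have poly: "(1 - 8 * d) * (1 + d)^2 \<le> (1 - d)^3"
  proof -
    have "(1 - d)^3 - (1 - 8 * d) * (1 + d)^2 = 3 * d + 18 * d^2 + 7 * d^3"
      by (simp add: power2_eq_square power3_eq_cube algebra_simps)
    moreover have "0 \<le> 3 * d + 18 * d^2 + 7 * d^3" using d by simp
    ultimately show ?thesis by simp
  qed
  have "B + X \<le> (1 + d) * B" using XB by (simp add: algebra_simps)
  moreover have "0 \<le> B" using n unfolding B_def by simp
  ultimately have "X * (B + X) \<le> ((1 + d) * \<mu>) * ((1 + d) * B)"
    using X d \<mu> by (intro mult_mono) auto
  hence "(1 - 8 * d) * X * (B + X) \<le> (1 - 8 * d) * (((1 + d) * \<mu>) * ((1 + d) * B))"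
    using d by (simp add: mult.assoc mult_left_mono)
  also have "\<dots> = ((1 - 8 * d) * (1 + d)^2) * (\<mu> * B)" by (simp add: power2_eq_square algebra_simps)
  also have "\<dots> \<le> (1 - d)^3 * (\<mu> * B)"
    using poly \<mu> n unfolding B_def by (intro mult_right_mono) auto
  also have "\<dots> = (1 - d)^2 * ((1 - d) * (\<mu> * B))" by (simp add: power3_eq_cube power2_eq_square)
  also have "\<dots> \<le> (1 - d)^2 * (K * r0)" using \<mu>B by (intro mult_left_mono) auto
  also have "\<dots> = ((1 - d) * K) * ((1 - d) * r0)" by (simp add: power2_eq_square algebra_simps)
  also have "\<dots> \<le> (K - X) * (r0 - X)"
    using K_X r0_X X_K r0 d by (intro mult_mono) auto
  finally show "(1 - 8 * d) * X * (B + X) \<le> (K - X) * (r0 - X)" .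
qed

lemma relative_step_le:
  fixes n m M :: nat and lam :: real
  defines "K \<equiv> n - 2" and "B \<equiv> (n - 2) choose 2"
  assumes n: "20 \<le> n" and "0 < M" and m: "real m \<le> (real n - 1) * (real n - 2) / 6"
    and lam: "\<bar>lam - 1\<bar> \<le> 1 / real M"
  shows "(real n - 1) * (real K / real (K + B - m) * (\<bar>lam - 1\<bar> + 4 / real M)) \<le> 15 / real M"
proof -
  have KB: "real K + real B = (real n - 1) * (real n - 2) / 2"
    unfolding K_def B_def using n real_choose_two[of "n - 2"] by (simp add: of_nat_diff field_simps)
  have pos: "0 < (real n - 1) * (real n - 2)" using n by simp
  hence "m \<le> K + B" using m KB by linarith
  hence "(real n - 1) * (real n - 2) / 3 \<le> real (K + B - m)" using m KB by (simp add: of_nat_diff)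
  hence "real K / real (K + B - m) \<le> (real n - 2) / ((real n - 1) * (real n - 2) / 3)"
    unfolding K_def using n pos by (intro frac_le) (auto simp: of_nat_diff)
  also have "\<dots> = 3 / (real n - 1)"
  proof -
    have "3 / (real n - 1) * ((real n - 1) * (real n - 2) / 3) = real n - 2" using n by simp
    thus ?thesis using pos n by (simp add: divide_eq_eq)
  qed
  finally have "(real n - 1) * (real K / real (K + B - m)) \<le> 3"
    using n by (simp add: field_simps)
  moreover have "\<bar>lam - 1\<bar> + 4 / real M \<le> 5 / real M" using lam by simp
  ultimately have "(real n - 1) * (real K / real (K + B - m)) * (\<bar>lam - 1\<bar> + 4 / real M) \<le> 3 * (5 / real M)"
    using n by (intro mult_mono) auto
  thus ?thesis by (simp add: mult.assoc)
qed

definition deviation_bound :: "nat \<Rightarrow> real" where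
  "deviation_bound M = (1 + 5 / real M) * exp (15 / real M) / ((1 - 1 / real M) * (1 - 15 / real M)) - 1"

lemma deviation_bound_tendsto_0: "deviation_bound \<longlonglongrightarrow> 0"
proof -
  have "(\<lambda>M. (1 + 5 / real M) * exp (15 / real M) / ((1 - 1 / real M) * (1 - 15 / real M)) - 1)
        \<longlonglongrightarrow> (1 + 0) * exp 0 / ((1 - 0) * (1 - 0)) - 1"
    by (intro tendsto_intros lim_const_over_n) auto
  thus ?thesis unfolding deviation_bound_def[abs_def] by simp
qed

lemma le_deviation_bound:
  assumes M: "16 \<le> M" and "2 \<le> n" "0 < lam" and lam: "\<bar>lam - 1\<bar> \<le> 1 / real M"
    and \<gamma>: "0 \<le> \<gamma>" "(real n - 1) * \<gamma> \<le> 15 / real M"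
  shows "(max 1 lam + 4 / real M) * (1 + \<gamma>) ^ (n - 1) / (min 1 lam * (1 - \<gamma>) ^ (n - 1)) - 1
         \<le> deviation_bound M"
proof -
  have n: "real (n - 1) = real n - 1" "1 \<le> real n - 1" using assms(2) by (simp_all add: of_nat_diff)
  have "15 / real M \<le> 1" using M by simp
  hence "\<gamma> \<le> 1" using \<gamma> n mult_right_mono[OF n(2) \<gamma>(1)] by linarith
  have "max 1 lam + 4 / real M \<le> 1 + 5 / real M" using lam by (auto simp: abs_le_iff max_def)
  moreover have "(1 + \<gamma>) ^ (n - 1) \<le> exp (15 / real M)"
  proof -
    have "(1 + \<gamma>) ^ (n - 1) \<le> exp \<gamma> ^ (n - 1)" using \<gamma> by (intro power_mono) (auto simp: exp_ge_add_one_self)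
    also have "\<dots> = exp (real (n - 1) * \<gamma>)" by (simp add: exp_of_nat_mult)
    finally show ?thesis using \<gamma>(2) n(1) by (simp add: order_trans)
  qed
  ultimately have num: "(max 1 lam + 4 / real M) * (1 + \<gamma>) ^ (n - 1) \<le> (1 + 5 / real M) * exp (15 / real M)"
    using \<gamma> by (intro mult_mono) auto
  have "1 - 1 / real M \<le> min 1 lam" using lam by (auto simp: abs_le_iff min_def)
  moreover have "1 - 15 / real M \<le> (1 - \<gamma>) ^ (n - 1)"
    using Bernoulli_inequality[of "- \<gamma>" "n - 1"] \<open>\<gamma> \<le> 1\<close> \<gamma>(2) n(1) by simp
  moreover have pos: "0 < 1 - 1 / real M" "0 < 1 - 15 / real M" using M by (auto simp: field_simps)
  ultimately have den: "(1 - 1 / real M) * (1 - 15 / real M) \<le> min 1 lam * (1 - \<gamma>) ^ (n - 1)"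
    using assms(3) by (intro mult_mono) auto
  have "(max 1 lam + 4 / real M) * (1 + \<gamma>) ^ (n - 1) / (min 1 lam * (1 - \<gamma>) ^ (n - 1))
      \<le> (1 + 5 / real M) * exp (15 / real M) / ((1 - 1 / real M) * (1 - 15 / real M))"
    using pos by (intro frac_le[OF _ num _ den]) auto
  thus ?thesis unfolding deviation_bound_def by simp
qed

lemma edge_count_bounds:
  fixes n m :: nat and \<mu> d :: real
  assumes n: "20 \<le> n" and m: "real m = \<mu> * real n / 2"
    and "2 \<le> \<mu>" "\<mu> \<le> d / 16 * real n" "d \<le> 1/256"
  shows "n \<le> m" "real m \<le> (real n - 1) * (real n - 2) / 6" "m \<le> (n - 2) choose 2" "real m < NN n"
proof -
  have "2 * real n \<le> \<mu> * real n" using assms by (intro mult_right_mono) auto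
  thus "n \<le> m" using m by simp
  have "\<mu> * real n \<le> d / 16 * real n * real n" using assms by (intro mult_right_mono) auto
  also have "\<dots> \<le> 1 / 256 / 16 * real n * real n" using assms by (intro mult_right_mono) auto
  finally have m_le: "real m \<le> real n * real n / 8192" using m by simp
  also have "\<dots> \<le> (real n - 1) * (real n - 2) / 6"
  proof -
    have "20 * real n \<le> real n * real n" using n by (intro mult_right_mono) auto
    moreover have "(real n - 1) * (real n - 2) = real n * real n - 3 * real n + 2" by (simp add: algebra_simps)
    ultimately show ?thesis by linarith
  qed
  finally show m6: "real m \<le> (real n - 1) * (real n - 2) / 6" .
  have "real ((n - 2) choose 2) = (real n - 2) * (real n - 3) / 2"
    using real_choose_two[of "n - 2"] n by (simp add: of_nat_diff algebra_simps)
  moreover have "(real n - 1) / 6 * (real n - 2) \<le> (real n - 3) / 2 * (real n - 2)"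
    using n by (intro mult_right_mono) auto
  hence "(real n - 1) * (real n - 2) / 6 \<le> (real n - 2) * (real n - 3) / 2" by (simp add: algebra_simps)
  ultimately show "m \<le> (n - 2) choose 2" using m6 by linarith
  have "real n * (real n / 8192) < real n * ((real n - 1) / 2)"
    using n by (intro mult_strict_left_mono) auto
  hence "real n * real n / 8192 < real n * (real n - 1) / 2" by simp
  thus "real m < NN n" using m_le unfolding NN_def real_choose_two by linarith
qed

lemma fixed_parameter_window:
  fixes n m M :: nat and t :: real
  defines "\<mu> \<equiv> mu n m" and "\<sigma> \<equiv> sigma n m" and "d \<equiv> 1 / (16 * real M)"
    and "X \<equiv> mu n m + t * sigma n m + real M"
  assumes n: "20 \<le> n" and M: "16 \<le> M" and "0 < \<mu>" "0 < t"
    and small: "t\<^sup>2 / \<mu> \<le> d\<^sup>2 / 8" "real M / \<mu> \<le> d / 2" "\<mu> / real n \<le> d / 16" "8 / real n \<le> d"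
  shows "n \<le> m" "real m \<le> (real n - 1) * (real n - 2) / 6" "m \<le> (n - 2) choose 2"
    and "0 < \<sigma>" "0 < \<mu> + t * \<sigma>" "X \<le> real (n - 2)" "X \<le> real (m - (n - 1))"
    and "(1 - 1 / (2 * real M)) * X * (real ((n - 2) choose 2) + X)
           \<le> (real (n - 2) - X) * (real (m - (n - 1)) - X)"
proof -
  have d: "0 < d" "d \<le> 1/256" unfolding d_def using M by auto
  have Mr: "16 \<le> real M" using M by simp
  have M_\<mu>: "real M \<le> d / 2 * \<mu>" "2 \<le> d * \<mu>" "4 \<le> \<mu>"
  proof -
    show "real M \<le> d / 2 * \<mu>" using small(2) \<open>0 < \<mu>\<close> by (simp add: pos_divide_le_eq)
    also have "\<dots> = \<mu> / (32 * real M)" unfolding d_def by simp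
    finally have "real M * (32 * real M) \<le> \<mu>" using Mr by (simp add: pos_le_divide_eq)
    moreover have "16 * (32 * 16) \<le> real M * (32 * real M)" using Mr by (intro mult_mono) auto
    ultimately show "4 \<le> \<mu>" by simp
    show "2 \<le> d * \<mu>" using \<open>real M \<le> d / 2 * \<mu>\<close> Mr by simp
  qed
  have \<mu>_n: "\<mu> \<le> d / 16 * real n" "8 \<le> d * real n"
    using small(3,4) n by (simp_all add: pos_divide_le_eq field_simps)
  have m: "real m = \<mu> * real n / 2" unfolding \<mu>_def using mu_eq[of n m] n by simp
  have "2 \<le> \<mu>" using M_\<mu>(3) by simp
  note edges = edge_count_bounds[OF n m this \<mu>_n(1) d(2)]
  thus "n \<le> m" "real m \<le> (real n - 1) * (real n - 2) / 6" "m \<le> (n - 2) choose 2" by simp_all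
  have \<sigma>: "0 < \<sigma>" "\<sigma>\<^sup>2 \<le> 2 * \<mu>" unfolding \<sigma>_def \<mu>_def
    using sigma_bounds[of n m] edges n \<open>0 < \<mu>\<close>[unfolded \<mu>_def] by (auto simp: mu_def)
  thus "0 < \<sigma>" by simp
  have "t * \<sigma> \<le> \<mu> * d / 2"
  proof (rule power2_le_imp_le)
    have "(t * \<sigma>)\<^sup>2 \<le> (d\<^sup>2 / 8 * \<mu>) * (2 * \<mu>)"
      using small(1) \<sigma> \<open>0 < \<mu>\<close> unfolding power_mult_distrib
      by (intro mult_mono) (auto simp: pos_divide_le_eq)
    thus "(t * \<sigma>)\<^sup>2 \<le> (\<mu> * d / 2)\<^sup>2" by (simp add: power2_eq_square algebra_simps)
  qed (use d \<open>0 < \<mu>\<close> in simp)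
  moreover have "0 < t * \<sigma>" using \<open>0 < t\<close> \<sigma> by simp
  ultimately have X: "0 \<le> X" "X \<le> (1 + d) * \<mu>" and "0 < \<mu> + t * \<sigma>"
    using M_\<mu>(1) \<open>0 < \<mu>\<close> unfolding X_def \<mu>_def[symmetric] \<sigma>_def[symmetric] by (auto simp: algebra_simps)
  thus "0 < \<mu> + t * \<sigma>" by simp
  have real_params: "real (n - 2) = real n - 2" "real (m - (n - 1)) = \<mu> * real n / 2 - real n + 1"
    "real ((n - 2) choose 2) = (real n - 2) * (real n - 3) / 2"
    using n edges m real_choose_two[of "n - 2"] by (auto simp: of_nat_diff algebra_simps)
  have "20 \<le> real n" "1 / (2 * real M) = 8 * d" using n unfolding d_def by simp_all
  with window_inequalities[OF _ d M_\<mu>(2) \<mu>_n(2) \<mu>_n(1) M_\<mu>(3) X, folded real_params]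
  show "X \<le> real (n - 2)" "X \<le> real (m - (n - 1))"
    and "(1 - 1 / (2 * real M)) * X * (real ((n - 2) choose 2) + X)
           \<le> (real (n - 2) - X) * (real (m - (n - 1)) - X)"
    by simp_all
qed

lemma deg1_deviation_le_deviation_bound:
  fixes n m M :: nat and k t :: real
  defines "\<mu> \<equiv> mu n m" and "\<sigma> \<equiv> sigma n m" and "d \<equiv> 1 / (16 * real M)"
  assumes n: "20 \<le> n" and M: "16 \<le> M" and "0 < \<mu>" "0 < t"
    and small: "t\<^sup>2 / \<mu> \<le> d\<^sup>2 / 8" "real M / \<mu> \<le> d / 2" "\<mu> / real n \<le> d / 16" "8 / real n \<le> d"
      "\<bar>k\<bar> / \<mu> \<le> 1 / (2 * real M)"
  shows "0 \<le> deg1_deviation n m (\<lambda>E. exp_tail (k * \<sigma> / \<mu>) t \<mu> \<sigma> (deg E 2))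
       \<and> deg1_deviation n m (\<lambda>E. exp_tail (k * \<sigma> / \<mu>) t \<mu> \<sigma> (deg E 2)) \<le> deviation_bound M"
proof -
  define x0 lam where "x0 = nat \<lceil>\<mu> + t * \<sigma>\<rceil> - 1" and "lam = exp (k / \<mu>)"
  note window = fixed_parameter_window[OF n M \<open>0 < \<mu>\<close>[unfolded \<mu>_def] \<open>0 < t\<close> small(1-4)[unfolded \<mu>_def d_def],
      folded \<mu>_def \<sigma>_def]
  interpret threshold_geometric "exp_tail (k * \<sigma> / \<mu>) t \<mu> \<sigma>" x0 lam
    using exp_tail_threshold_geometric(1)[where a = "k * \<sigma> / \<mu>" and t = t and \<mu> = \<mu> and \<sigma> = \<sigma>] window(4,5)
    unfolding x0_def lam_def by simp
  have x0: "real x0 < \<mu> + t * \<sigma>" "0 < exp_tail (k * \<sigma> / \<mu>) t \<mu> \<sigma> (Suc x0)"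
    using exp_tail_threshold_geometric(2)[of \<sigma> \<mu> t] exp_tail_threshold_geometric(3)[of \<sigma> \<mu> t "k * \<sigma> / \<mu>"]
      window(4,5) unfolding x0_def by auto
  have lam: "\<And>i. i \<le> M \<Longrightarrow> 1/2 \<le> lam ^ i" "\<bar>lam - 1\<bar> \<le> 1 / real M"
    using exp_small_bounds[of "k / \<mu>" M] small(5) \<open>0 < \<mu>\<close> M unfolding lam_def by (auto simp: abs_divide)
  define \<gamma> where "\<gamma> = real (n - 2) / real (n - 2 + ((n - 2) choose 2) - m) * (\<bar>lam - 1\<bar> + 4 / real M)"
  have \<gamma>: "0 \<le> \<gamma>" "(real n - 1) * \<gamma> \<le> 15 / real M"
    using relative_step_le[OF n _ window(2) lam(2)] M unfolding \<gamma>_def by auto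
  have "\<gamma> \<le> (real n - 1) * \<gamma>" using mult_right_mono[of 1 "real n - 1" \<gamma>] \<gamma>(1) n by simp
  moreover have "15 / real M < 1" using M by simp
  ultimately have "\<gamma> < 1" using \<gamma>(2) by linarith
  have "0 \<le> deg1_deviation n m (\<lambda>E. exp_tail (k * \<sigma> / \<mu>) t \<mu> \<sigma> (deg E 2))
      \<and> deg1_deviation n m (\<lambda>E. exp_tail (k * \<sigma> / \<mu>) t \<mu> \<sigma> (deg E 2))
        \<le> (max 1 lam + 4 / real M) * (1 + \<gamma>) ^ (n - 1) / (min 1 lam * (1 - \<gamma>) ^ (n - 1)) - 1"
  proof (rule deg1_deviation_bound)
    show "(1 - 1 / (2 * real M)) * hyp_weight (n - 2) ((n - 2) choose 2) r (x0 + i)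
        \<le> hyp_weight (n - 2) ((n - 2) choose 2) r (x0 + Suc i)" if "m - (n - 1) \<le> r" "i < M" for r i
      using hyp_weight_almost_increasing[OF _ window(6,7) that(1) _ window(8)] x0(1) that(2) M by simp
  qed (use n window(1,3,6,7) x0 lam(1) M \<open>\<gamma> < 1\<close> in \<open>auto simp: \<gamma>_def\<close>)
  thus ?thesis using le_deviation_bound[OF M _ lam_pos lam(2) \<gamma>] n by linarith
qed

subsection \<open>Asymptotics\<close>

lemma tendsto_0_of_eventually_bounded:
  fixes S V :: "nat \<Rightarrow> real"
  assumes "V \<longlonglongrightarrow> 0" and bound: "\<And>M. M0 \<le> M \<Longrightarrow> eventually (\<lambda>n. 0 \<le> S n \<and> S n \<le> V M) sequentially"
  shows "S \<longlonglongrightarrow> 0"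
proof (rule order_tendstoI)
  fix a :: real assume "a < 0"
  show "eventually (\<lambda>n. a < S n) sequentially"
    using bound[OF order_refl] by eventually_elim (use \<open>a < 0\<close> in auto)
next
  fix a :: real assume "0 < a"
  have "eventually (\<lambda>M. V M < a \<and> M0 \<le> M) sequentially"
    using order_tendstoD(2)[OF assms(1) \<open>0 < a\<close>] eventually_ge_at_top by eventually_elim auto
  then obtain M where "V M < a" "M0 \<le> M" unfolding eventually_sequentially by blast
  show "eventually (\<lambda>n. S n < a) sequentially"
    using bound[OF \<open>M0 \<le> M\<close>] by eventually_elim (use \<open>V M < a\<close> in auto)
qed

locale gnm_regime =
  fixes c :: real and k :: "nat \<Rightarrow> real" and m :: "nat \<Rightarrow> nat" and t :: "nat \<Rightarrow> real"
  assumes c_pos: "c > 0"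
    and k_large: "(\<lambda>n. (ln (real n))\<^sup>2 / k n) \<longlonglongrightarrow> 0"
    and k_small: "(\<lambda>n. k n / sqrt (real n)) \<longlonglongrightarrow> 0"
    and m_asymp: "(\<lambda>n. real (m n) / (c * (k n)\<^sup>2 * real n / ln (real n))) \<longlonglongrightarrow> 1"
    and t_asymp: "(\<lambda>n. t n / sqrt (2 * ln (real n))) \<longlonglongrightarrow> 1"
begin

definition edge_ratio :: "nat \<Rightarrow> real" where
  "edge_ratio n = real (m n) / (c * (k n)\<^sup>2 * real n / ln (real n))"

definition threshold_ratio :: "nat \<Rightarrow> real" where
  "threshold_ratio n = t n / sqrt (2 * ln (real n))"

lemma inverse_ln_tendsto_0: "(\<lambda>n. 1 / ln (real n)) \<longlonglongrightarrow> 0"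
  using tendsto_inverse_0_at_top[OF filterlim_compose[OF ln_at_top filterlim_real_sequentially]]
  by (simp add: inverse_eq_divide)

lemma eventually_mu_eq:
  "eventually (\<lambda>n. 3 \<le> n \<and> 1/2 < edge_ratio n \<and> 1/2 < threshold_ratio n \<and> 0 < ln (real n) \<and>
     k n \<noteq> 0 \<and> mu n (m n) = 2 * edge_ratio n * c * (k n)\<^sup>2 / ln (real n) \<and>
     t n = threshold_ratio n * sqrt (2 * ln (real n))) sequentially"
proof -
  have "eventually (\<lambda>n. 1/2 < edge_ratio n) sequentially"
    and "eventually (\<lambda>n. 1/2 < threshold_ratio n) sequentially"
    using order_tendstoD(1)[OF m_asymp, of "1/2"] order_tendstoD(1)[OF t_asymp, of "1/2"]
    unfolding edge_ratio_def threshold_ratio_def by simp_all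
  with eventually_ge_at_top[of 3] show ?thesis
  proof eventually_elim
    case (elim n)
    hence L: "0 < ln (real n)" by simp
    have "c * (k n)\<^sup>2 * real n / ln (real n) \<noteq> 0"
    proof
      assume "c * (k n)\<^sup>2 * real n / ln (real n) = 0"
      hence "edge_ratio n = 0" unfolding edge_ratio_def by (simp only: div_by_0)
      thus False using elim(2) by simp
    qed
    hence "k n \<noteq> 0" "real (m n) = edge_ratio n * (c * (k n)\<^sup>2 * real n / ln (real n))"
      unfolding edge_ratio_def by simp_all
    hence "mu n (m n) = 2 * edge_ratio n * c * (k n)\<^sup>2 / ln (real n)"
      using elim(1) L by (simp add: mu_eq field_simps)
    moreover have "t n = threshold_ratio n * sqrt (2 * ln (real n))" unfolding threshold_ratio_def using L by simp
    ultimately show ?case using elim L \<open>k n \<noteq> 0\<close> by blast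
  qed
qed

lemma eventually_pos: "eventually (\<lambda>n. 0 < mu n (m n) \<and> 0 < t n) sequentially"
  using eventually_mu_eq by eventually_elim (use c_pos in \<open>auto intro!: divide_pos_pos mult_pos_pos\<close>)

lemma abs_k_over_mu_tendsto_0: "(\<lambda>n. \<bar>k n\<bar> / mu n (m n)) \<longlonglongrightarrow> 0"
proof (rule Lim_transform_eventually)
  show "(\<lambda>n. \<bar>(ln (real n))\<^sup>2 / k n\<bar> * (1 / ln (real n)) / (2 * c * edge_ratio n)) \<longlonglongrightarrow> 0"
    using tendsto_divide[OF tendsto_mult[OF tendsto_rabs_zero[OF k_large] inverse_ln_tendsto_0]
        tendsto_mult[OF tendsto_const m_asymp[folded edge_ratio_def], of "2 * c"]] c_pos by simp
  show "\<forall>\<^sub>F n in sequentially. \<bar>(ln (real n))\<^sup>2 / k n\<bar> * (1 / ln (real n)) / (2 * c * edge_ratio n) = \<bar>k n\<bar> / mu n (m n)"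
    using eventually_mu_eq by eventually_elim (use c_pos in \<open>simp add: field_simps power2_eq_square abs_mult abs_divide\<close>)
qed

lemma inverse_mu_tendsto_0: "(\<lambda>n. 1 / mu n (m n)) \<longlonglongrightarrow> 0"
proof (rule Lim_transform_eventually)
  show "(\<lambda>n. \<bar>(ln (real n))\<^sup>2 / k n\<bar>^2 * (1 / ln (real n))^3 / (2 * c * edge_ratio n)) \<longlonglongrightarrow> 0"
    using tendsto_divide[OF tendsto_mult[OF tendsto_power[OF tendsto_rabs_zero[OF k_large], of 2]
        tendsto_power[OF inverse_ln_tendsto_0, of 3]] tendsto_mult[OF tendsto_const m_asymp[folded edge_ratio_def], of "2 * c"]]
      c_pos by simp
  show "\<forall>\<^sub>F n in sequentially. \<bar>(ln (real n))\<^sup>2 / k n\<bar>^2 * (1 / ln (real n))^3 / (2 * c * edge_ratio n) = 1 / mu n (m n)"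
    using eventually_mu_eq by eventually_elim (use c_pos in \<open>simp add: field_simps power2_eq_square power3_eq_cube\<close>)
qed

lemma t_sq_over_mu_tendsto_0: "(\<lambda>n. (t n)\<^sup>2 / mu n (m n)) \<longlonglongrightarrow> 0"
proof (rule Lim_transform_eventually)
  show "(\<lambda>n. (threshold_ratio n)^2 * \<bar>(ln (real n))\<^sup>2 / k n\<bar>^2 * (1 / ln (real n))^2 / (c * edge_ratio n)) \<longlonglongrightarrow> 0"
    using tendsto_divide[OF tendsto_mult[OF tendsto_mult[OF tendsto_power[OF t_asymp[folded threshold_ratio_def], of 2]
        tendsto_power[OF tendsto_rabs_zero[OF k_large], of 2]] tendsto_power[OF inverse_ln_tendsto_0, of 2]]
        tendsto_mult[OF tendsto_const m_asymp[folded edge_ratio_def], of c]] c_pos by simp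
  show "\<forall>\<^sub>F n in sequentially. (threshold_ratio n)^2 * \<bar>(ln (real n))\<^sup>2 / k n\<bar>^2 * (1 / ln (real n))^2 / (c * edge_ratio n)
      = (t n)\<^sup>2 / mu n (m n)"
    using eventually_mu_eq by eventually_elim (use c_pos in \<open>simp add: field_simps power2_eq_square\<close>)
qed

lemma mu_over_n_tendsto_0: "(\<lambda>n. mu n (m n) / real n) \<longlonglongrightarrow> 0"
proof (rule Lim_transform_eventually)
  show "(\<lambda>n. 2 * c * edge_ratio n * (k n / sqrt (real n))^2 * (1 / ln (real n))) \<longlonglongrightarrow> 0"
    using tendsto_mult[OF tendsto_mult[OF tendsto_mult[OF tendsto_const m_asymp[folded edge_ratio_def], of "2 * c"]
        tendsto_power[OF k_small, of 2]] inverse_ln_tendsto_0] by simp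
  show "\<forall>\<^sub>F n in sequentially. 2 * c * edge_ratio n * (k n / sqrt (real n))^2 * (1 / ln (real n)) = mu n (m n) / real n"
    using eventually_mu_eq by eventually_elim (simp add: field_simps power_divide)
qed


definition tail_deviation :: "nat \<Rightarrow> real" where
  "tail_deviation n = deg1_deviation n (m n)
     (\<lambda>E. exp_tail (k n * sigma n (m n) / mu n (m n)) (t n) (mu n (m n)) (sigma n (m n)) (deg E 2))"

lemma eventually_tail_deviation_le:
  assumes M: "16 \<le> M"
  shows "eventually (\<lambda>n. 0 \<le> tail_deviation n \<and> tail_deviation n \<le> deviation_bound M) sequentially"
proof -
  define d where "d = 1 / (16 * real M)"
  have "0 < d" "0 < 1 / (2 * real M)" unfolding d_def using M by auto
  have "eventually (\<lambda>n. (t n)\<^sup>2 / mu n (m n) < d\<^sup>2 / 8) sequentially"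
    by (rule order_tendstoD(2)[OF t_sq_over_mu_tendsto_0]) (use \<open>0 < d\<close> in simp)
  moreover have "eventually (\<lambda>n. real M * (1 / mu n (m n)) < d / 2) sequentially"
    by (rule order_tendstoD(2)[OF tendsto_mult_right_zero[OF inverse_mu_tendsto_0]]) (use \<open>0 < d\<close> in simp)
  moreover have "eventually (\<lambda>n. mu n (m n) / real n < d / 16) sequentially"
    by (rule order_tendstoD(2)[OF mu_over_n_tendsto_0]) (use \<open>0 < d\<close> in simp)
  moreover have "eventually (\<lambda>n. 8 / real n < d) sequentially"
    by (rule order_tendstoD(2)[OF lim_const_over_n]) (use \<open>0 < d\<close> in simp)
  moreover have "eventually (\<lambda>n. \<bar>k n\<bar> / mu n (m n) < 1 / (2 * real M)) sequentially"
    by (rule order_tendstoD(2)[OF abs_k_over_mu_tendsto_0]) (use \<open>0 < 1 / (2 * real M)\<close> in simp)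
  ultimately have "eventually (\<lambda>n. (t n)\<^sup>2 / mu n (m n) < d\<^sup>2 / 8 \<and> real M * (1 / mu n (m n)) < d / 2
      \<and> mu n (m n) / real n < d / 16 \<and> 8 / real n < d \<and> \<bar>k n\<bar> / mu n (m n) < 1 / (2 * real M)) sequentially"
    by eventually_elim blast
  with eventually_ge_at_top[of 20] eventually_pos show ?thesis
  proof eventually_elim
    case (elim n)
    thus ?case unfolding tail_deviation_def
      using deg1_deviation_le_deviation_bound[of n M "m n" "t n" "k n", folded d_def] M
      by (simp add: less_imp_le)
  qed
qed

end

theorem mainTheorem17:
  fixes c :: real and k :: "nat \<Rightarrow> real" and m :: "nat \<Rightarrow> nat" and t :: "nat \<Rightarrow> real"
  assumes "c > 0"
    and "(\<lambda>n. (ln (real n))\<^sup>2 / k n) \<longlonglongrightarrow> 0"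
    and "(\<lambda>n. k n / sqrt (real n)) \<longlonglongrightarrow> 0"
    and "(\<lambda>n. real (m n) / (c * (k n)\<^sup>2 * real n / ln (real n))) \<longlonglongrightarrow> 1"
    and "(\<lambda>n. t n / sqrt (2 * ln (real n))) \<longlonglongrightarrow> 1"
  shows "(\<lambda>n. let a = k n * sigma n (m n) / mu n (m n);
                  F = (\<lambda>E. exp (a * Ydeg n (m n) E 2) *
                             (if Ydeg n (m n) E 2 \<ge> t n then 1 else 0))
              in Sup ((\<lambda>j. \<bar>Gcondexp n (m n) F (\<lambda>E. deg E 1 = j) / Gexp n (m n) F - 1\<bar>)
                      ` {j. j < n \<and> Gprob n (m n) (\<lambda>E. deg E 1 = j) > 0}))
         \<longlonglongrightarrow> 0"
proof -
  interpret gnm_regime c k m t using assms by unfold_locales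
  have F_eq: "exp (a * Ydeg n' m' E 2) * (if Ydeg n' m' E 2 \<ge> t' then 1 else 0)
      = exp_tail a t' (mu n' m') (sigma n' m') (deg E 2)" for a t' n' m' E
    by (simp add: Ydeg_def exp_tail_def)
  have "tail_deviation \<longlonglongrightarrow> 0"
    by (rule tendsto_0_of_eventually_bounded[OF deviation_bound_tendsto_0 eventually_tail_deviation_le])
  thus ?thesis unfolding Let_def F_eq tail_deviation_def[abs_def] deg1_deviation_def .
qed

end
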